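(* Let $\lambda/\mu$ be an r-shape and $\mathbf a,\mathbf b$ column flags for it. Then $$\mathsf S^{\mathbf a,\mathbf b}_{\lambda/\mu}(\mathbf y/\mathbf z)=\sum_{T\in ST_{\lambda/\mu}(\mathbf a,\mathbf b)}wt(T).$$
   Context: Young diagrams are in English notation; cell $(i,j)$ is in row $i$, column $j$; $\lambda'$ is the conjugate partition; $\lambda/\mu=[\lambda]\setminus[\mu]$ for $\mu\subseteq\lambda$. An r-shape is a pair $(\lambda/\mu,r)$, $r\in\mathbb Z$, with shifted contents $c(i,j)=j-i+r-1+\lambda'_1$ (bottom-left cell has content $r$). Column flags: for $n\ge\lambda_1$, $\mathbf a,\mathbf b\in\mathbb Z^n$ with $a_i-a_{i+1}\le\mu'_i-\mu'_{i+1}+1$ and $b_i-b_{i+1}\le\lambda'_i-\lambda'_{i+1}+1$ whenever $\mu'_i<\lambda'_{i+1}$; conjugate flags $a'_i=a_i+c(\gamma_i)$, $b'_i=b_i+c(\delta_i)$ with $\gamma_i,\delta_i$ the top and bottom cells of column $i$. $\mathbf y=(y_i)_{i\in\mathbb Z}$, $\mathbf z=(z_i)_{i\in\mathbb Z}$, $\mathbf y_{a,b}=(y_a,\dots,y_b)$ (empty if $a>b$); $e_n(\mathbf x/\mathbf w)=\sum_{i=0}^n(-1)^{n-i}e_i(\mathbf x)h_{n-i}(\mathbf w)$ ($e_0=1$, $e_n=0$ for $n<0$). $\mathsf S^{\mathbf a,\mathbf b}_{\lambda/\mu}(\mathbf y/\mathbf z)=\det[e_{\lambda'_i-i-\mu'_j+j}(\mathbf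 y_{a_j,b_i}/\mathbf z_{a'_j,b'_i})]_{1\le i,j\le n}$. A flagged $\mathbb Z$-SSYT of r-shape $\lambda/\mu$ with flags $\mathbf a,\mathbf b$ is a filling $\tilde T=(\tilde T_{ij})$ of the cells by integers, weakly increasing left to right along rows, strictly increasing top to bottom along columns, with $a_j\le\tilde T_{ij}\le b_j$ for every cell in column $j$. From such $\tilde T$, a flagged super tableau $T$ is obtained by choosing, independently for each cell, either $T_{ij}=\tilde T_{ij}\in\mathbb Z$ or the primed entry $T_{ij}=(\tilde T_{ij}+c(i,j))'\in\mathbb Z'$ ($c$ the shifted content). $ST_{\lambda/\mu}(\mathbf a,\mathbf b)$ is the set of all super tableaux so obtained from all flagged $\mathbb Z$-SSYT. The weight is $wt(T)=\prod_{(i,j)}wt(T_{ij})$ with $wt(r)=y_r$ and $wt(r')=-z_r$ for $r\in\mathbb Z$. *)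

theory Defs
  imports Main "Jordan_Normal_Form.Determinant"
begin

(* Partitions are weakly decreasing lists of naturals; parts are 1-indexed,
   and lambda_i = 0 beyond the list. *)
definition is_partition :: "nat list \<Rightarrow> bool" where
  "is_partition lam \<longleftrightarrow> sorted_wrt (\<ge>) lam"

definition part_at :: "nat list \<Rightarrow> nat \<Rightarrow> nat" where
  "part_at lam i = (if 1 \<le> i \<and> i \<le> length lam then lam ! (i - 1) else 0)"

definition conj_part :: "nat list \<Rightarrow> nat \<Rightarrow> nat" where
  "conj_part lam j = card {i \<in> {1..length lam}. j \<le> part_at lam i}"

definition part_subseteq :: "nat list \<Rightarrow> nat list \<Rightarrow> bool" where
  "part_subseteq mu lam \<longleftrightarrow> (\<forall>i. part_at mu i \<le> part_at lam i)"

definition diagram :: "nat list \<Rightarrow> (nat \<times> nat) set" where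
  "diagram lam = {(i, j). 1 \<le> i \<and> 1 \<le> j \<and> j \<le> part_at lam i}"

definition skew :: "nat list \<Rightarrow> nat list \<Rightarrow> (nat \<times> nat) set" where
  "skew lam mu = diagram lam - diagram mu"

(* shifted content of the r-shape (lam/mu, r) *)
definition content :: "nat list \<Rightarrow> int \<Rightarrow> nat \<times> nat \<Rightarrow> int" where
  "content lam r c = int (snd c) - int (fst c) + r - 1 + int (conj_part lam 1)"

definition column_flags :: "nat list \<Rightarrow> nat list \<Rightarrow> nat \<Rightarrow> (nat \<Rightarrow> int) \<Rightarrow> (nat \<Rightarrow> int) \<Rightarrow> bool" where
  "column_flags lam mu n a b \<longleftrightarrow> part_at lam 1 \<le> n \<and>
     (\<forall>i. 1 \<le> i \<and> i < n \<and> conj_part mu i < conj_part lam (i + 1) \<longrightarrow>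
        a i - a (i + 1) \<le> int (conj_part mu i) - int (conj_part mu (i + 1)) + 1 \<and>
        b i - b (i + 1) \<le> int (conj_part lam i) - int (conj_part lam (i + 1)) + 1)"

(* conjugate flags: gamma_i = (mu'_i + 1, i) top cell, delta_i = (lam'_i, i) bottom cell of column i *)
definition conj_flag_a :: "nat list \<Rightarrow> nat list \<Rightarrow> int \<Rightarrow> (nat \<Rightarrow> int) \<Rightarrow> nat \<Rightarrow> int" where
  "conj_flag_a lam mu r a i = a i + content lam r (conj_part mu i + 1, i)"

definition conj_flag_b :: "nat list \<Rightarrow> int \<Rightarrow> (nat \<Rightarrow> int) \<Rightarrow> nat \<Rightarrow> int" where
  "conj_flag_b lam r b i = b i + content lam r (conj_part lam i, i)"

definition esym :: "(int \<Rightarrow> 'a::comm_ring_1) \<Rightarrow> int \<Rightarrow> int \<Rightarrow> nat \<Rightarrow> 'a" where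
  "esym y a b k = (\<Sum>S\<in>{S. S \<subseteq> {a..b} \<and> card S = k}. \<Prod>i\<in>S. y i)"

definition hsym :: "(int \<Rightarrow> 'a::comm_ring_1) \<Rightarrow> int \<Rightarrow> int \<Rightarrow> nat \<Rightarrow> 'a" where
  "hsym z a b k = (\<Sum>m\<in>{m. (\<forall>i. i \<notin> {a..b} \<longrightarrow> m i = 0) \<and> sum m {a..b} = k}.
                      \<Prod>i\<in>{a..b}. z i ^ m i)"

definition esup :: "(int \<Rightarrow> 'a::comm_ring_1) \<Rightarrow> (int \<Rightarrow> 'a) \<Rightarrow> int \<Rightarrow> int \<Rightarrow> int \<Rightarrow> int \<Rightarrow> int \<Rightarrow> 'a" where
  "esup y z a b a' b' n = (if n < 0 then 0 else
     (\<Sum>i\<in>{0..nat n}. (-1) ^ (nat n - i) * esym y a b i * hsym z a' b' (nat n - i)))"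

definition flagged_S :: "nat list \<Rightarrow> nat list \<Rightarrow> int \<Rightarrow> nat \<Rightarrow> (nat \<Rightarrow> int) \<Rightarrow> (nat \<Rightarrow> int)
    \<Rightarrow> (int \<Rightarrow> 'a::comm_ring_1) \<Rightarrow> (int \<Rightarrow> 'a) \<Rightarrow> 'a" where
  "flagged_S lam mu r n a b y z = det (mat n n (\<lambda>(i0, j0).
     let i = i0 + 1; j = j0 + 1 in
     esup y z (a j) (b i) (conj_flag_a lam mu r a j) (conj_flag_b lam r b i)
       (int (conj_part lam i) - int i - int (conj_part mu j) + int j)))"

definition flagged_SSYT :: "nat list \<Rightarrow> nat list \<Rightarrow> (nat \<Rightarrow> int) \<Rightarrow> (nat \<Rightarrow> int) \<Rightarrow> (nat \<times> nat \<Rightarrow> int) \<Rightarrow> bool" where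
  "flagged_SSYT lam mu a b T \<longleftrightarrow>
     (\<forall>i j. (i, j) \<in> skew lam mu \<and> (i, j + 1) \<in> skew lam mu \<longrightarrow> T (i, j) \<le> T (i, j + 1)) \<and>
     (\<forall>i j. (i, j) \<in> skew lam mu \<and> (i + 1, j) \<in> skew lam mu \<longrightarrow> T (i, j) < T (i + 1, j)) \<and>
     (\<forall>i j. (i, j) \<in> skew lam mu \<longrightarrow> a j \<le> T (i, j) \<and> T (i, j) \<le> b j)"

(* super tableau entries: Inl r = r \<in> Z, Inr r = r' \<in> Z'.  Cells in P are primed. *)
definition super_of :: "nat list \<Rightarrow> nat list \<Rightarrow> int \<Rightarrow> (nat \<times> nat \<Rightarrow> int) \<Rightarrow> (nat \<times> nat) set
    \<Rightarrow> nat \<times> nat \<Rightarrow> int + int" where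
  "super_of lam mu r T P = (\<lambda>c. if c \<in> skew lam mu then
       (if c \<in> P then Inr (T c + content lam r c) else Inl (T c)) else undefined)"

definition ST :: "nat list \<Rightarrow> nat list \<Rightarrow> int \<Rightarrow> (nat \<Rightarrow> int) \<Rightarrow> (nat \<Rightarrow> int) \<Rightarrow> (nat \<times> nat \<Rightarrow> int + int) set" where
  "ST lam mu r a b = {super_of lam mu r T P | T P. flagged_SSYT lam mu a b T \<and> P \<subseteq> skew lam mu}"

definition wt_entry :: "(int \<Rightarrow> 'a::comm_ring_1) \<Rightarrow> (int \<Rightarrow> 'a) \<Rightarrow> int + int \<Rightarrow> 'a" where
  "wt_entry y z e = (case e of Inl r \<Rightarrow> y r | Inr r \<Rightarrow> - z r)"

definition wt :: "nat list \<Rightarrow> nat list \<Rightarrow> (int \<Rightarrow> 'a::comm_ring_1) \<Rightarrow> (int \<Rightarrow> 'a) \<Rightarrow> (nat \<times> nat \<Rightarrow> int + int) \<Rightarrow> 'a" where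
  "wt lam mu y z T = (\<Prod>c\<in>skew lam mu. wt_entry y z (T c))"

end

(* Expand the determinant over permutations. By the one-column identity column_sum_eq_esup, the
   entry e(y_{a_j..b_i} / z_{a'_j..b'_i}) of the matrix is the generating function of strictly
   increasing columns with entries in [a_j, b_i], a column entry s of content c weighing
   y_s - z_{s+c}. Reading a column as a lattice path that rises exactly at its entries, the
   determinant becomes a signed sum over families of paths, and the Lindstrom-Gessel-Viennot
   involution (exchange the tails of two paths at their first meeting point) cancels every family
   in which two paths meet. The flag conditions force a nonintersecting family to connect source j
   to sink j, and such families are exactly the columns of flagged tableaux of shape lam/mu.
   Expanding each factor y_s - z_{s+c} as the choice between an unprimed and a primed entry then
   gives the sum over super tableaux. *)

theory Submission
  imports Defs
begin

section \<open>Elementary and complete homogeneous symmetric polynomials\<close>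

lemma sum_subsets_insert:
  assumes fin: "finite A" and x: "x \<notin> A"
  shows "(\<Sum>S | S \<subseteq> insert x A \<and> card S = Suc k. f S) =
         (\<Sum>S | S \<subseteq> A \<and> card S = Suc k. f S) + (\<Sum>S | S \<subseteq> A \<and> card S = k. f (insert x S))"
proof -
  let ?A = "{S. S \<subseteq> A \<and> card S = Suc k}" and ?B = "{S. S \<subseteq> A \<and> card S = k}"
  have split: "{S. S \<subseteq> insert x A \<and> card S = Suc k} = ?A \<union> insert x ` ?B"
  proof (intro equalityI subsetI)
    fix S assume S: "S \<in> {S. S \<subseteq> insert x A \<and> card S = Suc k}"
    have "finite S" using S fin finite_subset by auto
    show "S \<in> ?A \<union> insert x ` ?B"
    proof (cases "x \<in> S")
      case True
      then have "S - {x} \<in> ?B" "S = insert x (S - {x})" using S \<open>finite S\<close> by auto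
      then show ?thesis by blast
    qed (use S in auto)
  next
    fix S assume "S \<in> ?A \<union> insert x ` ?B"
    then show "S \<in> {S. S \<subseteq> insert x A \<and> card S = Suc k}"
    proof
      assume "S \<in> insert x ` ?B"
      then obtain T where T: "T \<subseteq> A" "card T = k" "S = insert x T" by auto
      then have "finite T" "x \<notin> T" using fin x finite_subset by auto
      then show ?thesis using T by auto
    qed auto
  qed
  have inj: "inj_on (insert x) ?B"
  proof (rule inj_onI)
    fix S T assume "S \<in> ?B" "T \<in> ?B" "insert x S = insert x T"
    then show "S = T" using x by (metis Diff_insert_absorb mem_Collect_eq subsetD)
  qed
  have "finite ?A" "finite ?B" using fin by (auto intro: finite_subset[of _ "Pow A"])
  then have "(\<Sum>S | S \<subseteq> insert x A \<and> card S = Suc k. f S) = sum f ?A + sum f (insert x ` ?B)"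
    unfolding split using x by (intro sum.union_disjoint) auto
  also have "sum f (insert x ` ?B) = (\<Sum>S\<in>?B. f (insert x S))"
    using sum.reindex[OF inj] by simp
  finally show ?thesis .
qed

lemma interval_insert_top: "a \<le> b \<Longrightarrow> {a..b} = insert b {a..b - 1::int}"
  by auto

lemma esym_0 [simp]: "esym y a b 0 = 1"
proof -
  have "{S. S \<subseteq> {a..b} \<and> card S = 0} = {{}}"
    by (auto dest: finite_subset[OF _ finite_atLeastAtMost_int])
  then show ?thesis unfolding esym_def by simp
qed

lemma esym_eq_0_if_too_many: "nat (b - a + 1) < k \<Longrightarrow> esym y a b k = 0"
proof -
  assume k: "nat (b - a + 1) < k"
  have "{S. S \<subseteq> {a..b} \<and> card S = k} = {}"
  proof (rule ccontr)
    assume "{S. S \<subseteq> {a..b} \<and> card S = k} \<noteq> {}"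
    then obtain S where S: "S \<subseteq> {a..b}" "card S = k" by auto
    then have "card S \<le> card {a..b}" by (intro card_mono) auto
    then show False using S k by simp
  qed
  note empty = this
  show ?thesis unfolding esym_def empty by simp
qed

lemma esym_Suc:
  assumes "a \<le> b"
  shows "esym y a b (Suc k) = esym y a (b - 1) (Suc k) + y b * esym y a (b - 1) k"
proof -
  have "esym y a b (Suc k) = esym y a (b - 1) (Suc k) +
      (\<Sum>S | S \<subseteq> {a..b - 1} \<and> card S = k. \<Prod>i\<in>insert b S. y i)"
    unfolding esym_def interval_insert_top[OF assms] by (rule sum_subsets_insert) auto
  also have "(\<Sum>S | S \<subseteq> {a..b - 1} \<and> card S = k. \<Prod>i\<in>insert b S. y i) =
      (\<Sum>S | S \<subseteq> {a..b - 1} \<and> card S = k. y b * (\<Prod>i\<in>S. y i))"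
  proof (rule sum.cong[OF refl])
    fix S assume "S \<in> {S. S \<subseteq> {a..b - 1} \<and> card S = k}"
    then have "b \<notin> S" "finite S" using finite_subset by auto
    then show "(\<Prod>i\<in>insert b S. y i) = y b * (\<Prod>i\<in>S. y i)" by simp
  qed
  finally show ?thesis unfolding esym_def by (simp add: sum_distrib_left)
qed

definition exponent_vectors :: "int \<Rightarrow> int \<Rightarrow> nat \<Rightarrow> (int \<Rightarrow> nat) set" where
  "exponent_vectors a b k = {m. (\<forall>i. i \<notin> {a..b} \<longrightarrow> m i = 0) \<and> sum m {a..b} = k}"

lemma hsym_exponent_vectors: "hsym z a b k = (\<Sum>m\<in>exponent_vectors a b k. \<Prod>i\<in>{a..b}. z i ^ m i)"
  unfolding hsym_def exponent_vectors_def ..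

lemma finite_exponent_vectors: "finite (exponent_vectors a b k)"
proof (rule finite_subset)
  show "exponent_vectors a b k \<subseteq>
      {f. \<forall>x. (x \<in> {a..b} \<longrightarrow> f x \<in> {0..k}) \<and> (x \<notin> {a..b} \<longrightarrow> f x = 0)}"
  proof
    fix m assume "m \<in> exponent_vectors a b k"
    then have m: "\<forall>i. i \<notin> {a..b} \<longrightarrow> m i = 0" "sum m {a..b} = k"
      unfolding exponent_vectors_def by auto
    have "\<forall>x\<in>{a..b}. m x \<le> k" using m(2) member_le_sum[of _ "{a..b}" m] by fastforce
    then show "m \<in> {f. \<forall>x. (x \<in> {a..b} \<longrightarrow> f x \<in> {0..k}) \<and> (x \<notin> {a..b} \<longrightarrow> f x = 0)}"
      using m(1) by auto
  qed
  show "finite {f. \<forall>x. (x \<in> {a..b} \<longrightarrow> f x \<in> {0..k}) \<and> (x \<notin> {a..b} \<longrightarrow> f x = (0::nat))}"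
    by (rule finite_set_of_finite_funs) auto
qed

lemma hsym_0 [simp]: "hsym z a b 0 = 1"
proof -
  have "exponent_vectors a b 0 = {\<lambda>_. 0}"
  proof (intro equalityI subsetI)
    fix m assume "m \<in> exponent_vectors a b 0"
    then have m: "\<forall>i. i \<notin> {a..b} \<longrightarrow> m i = 0" "sum m {a..b} = 0"
      unfolding exponent_vectors_def by auto
    then have "\<forall>i\<in>{a..b}. m i = 0" by simp
    with m(1) have "m = (\<lambda>_. 0)" by (intro ext) (metis atLeastAtMost_iff)
    then show "m \<in> {\<lambda>_. 0}" by simp
  qed (auto simp: exponent_vectors_def)
  then show ?thesis unfolding hsym_exponent_vectors by simp
qed

lemma hsym_empty: "b < a \<Longrightarrow> 0 < k \<Longrightarrow> hsym z a b k = 0"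
  unfolding hsym_exponent_vectors exponent_vectors_def by simp

lemma exponent_vectors_top_zero:
  assumes ab: "a \<le> b"
  shows "{m \<in> exponent_vectors a b k. m b = 0} = exponent_vectors a (b - 1) k"
proof (intro equalityI subsetI)
  note ins = interval_insert_top[OF ab]
  have bn: "b \<notin> {a..b - 1}" by simp
  fix m assume "m \<in> {m \<in> exponent_vectors a b k. m b = 0}"
  then have m: "\<forall>i. i \<notin> {a..b} \<longrightarrow> m i = 0" "sum m {a..b} = k" "m b = 0"
    unfolding exponent_vectors_def by auto
  have "sum m {a..b} = sum m {a..b - 1}" unfolding ins using bn m(3) by simp
  moreover have "\<forall>i. i \<notin> {a..b - 1} \<longrightarrow> m i = 0"
  proof (intro allI impI)
    fix i assume "i \<notin> {a..b - 1}"
    then have "i \<notin> {a..b} \<or> i = b" by auto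
    then show "m i = 0" using m(1) m(3) by blast
  qed
  ultimately show "m \<in> exponent_vectors a (b - 1) k" using m(2) unfolding exponent_vectors_def by simp
next
  note ins = interval_insert_top[OF ab]
  have bn: "b \<notin> {a..b - 1}" by simp
  fix m assume "m \<in> exponent_vectors a (b - 1) k"
  then have m: "\<forall>i. i \<notin> {a..b - 1} \<longrightarrow> m i = 0" "sum m {a..b - 1} = k"
    unfolding exponent_vectors_def by auto
  have mb: "m b = 0" using m(1) by simp
  have "sum m {a..b} = sum m {a..b - 1}" unfolding ins using bn mb by simp
  moreover have "\<forall>i. i \<notin> {a..b} \<longrightarrow> m i = 0" using m(1) by auto
  ultimately show "m \<in> {m \<in> exponent_vectors a b k. m b = 0}" using m(2) mb unfolding exponent_vectors_def by simp
qed

text \<open>Lowering the exponent of \<open>z b\<close> by one is a bijection onto the exponent vectors of degree \<open>k\<close>.\<close>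

lemma sum_exponent_vectors_top_pos:
  assumes ab: "a \<le> b"
  shows "(\<Sum>m\<in>{m \<in> exponent_vectors a b (Suc k). m b \<noteq> 0}. \<Prod>i\<in>{a..b}. z i ^ m i) = z b * hsym z a b k"
proof -
  let ?P = "\<lambda>c m. \<Prod>i\<in>{a..c}. z i ^ m i"
  let ?Y = "{m \<in> exponent_vectors a b (Suc k). m b \<noteq> 0}"
  note ins = interval_insert_top[OF ab]
  have bn: "b \<notin> {a..b - 1}" by simp
  have "sum (?P b) ?Y = (\<Sum>m\<in>exponent_vectors a b k. ?P b (m(b := Suc (m b))))"
  proof (rule sum.reindex_bij_witness[of _ "\<lambda>m. m(b := Suc (m b))" "\<lambda>m. m(b := m b - 1)"])
    fix m assume "m \<in> ?Y"
    then have m: "\<forall>i. i \<notin> {a..b} \<longrightarrow> m i = 0" "sum m {a..b} = Suc k" "m b \<noteq> 0"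
      unfolding exponent_vectors_def by auto
    have "sum (m(b := m b - 1)) {a..b} = sum m {a..b - 1} + (m b - 1)"
      unfolding ins using bn by simp
    also have "sum m {a..b} = sum m {a..b - 1} + m b" unfolding ins using bn by simp
    ultimately have "sum (m(b := m b - 1)) {a..b} = k" using m by simp
    then show "m(b := m b - 1) \<in> exponent_vectors a b k"
      using m(1) ab unfolding exponent_vectors_def by auto
  next
    fix m assume "m \<in> exponent_vectors a b k"
    then have m: "\<forall>i. i \<notin> {a..b} \<longrightarrow> m i = 0" "sum m {a..b} = k"
      unfolding exponent_vectors_def by auto
    have "sum (m(b := Suc (m b))) {a..b} = sum m {a..b - 1} + Suc (m b)"
      unfolding ins using bn by simp
    also have "sum m {a..b} = sum m {a..b - 1} + m b" unfolding ins using bn by simp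
    ultimately have "sum (m(b := Suc (m b))) {a..b} = Suc k" using m by simp
    then show "m(b := Suc (m b)) \<in> ?Y" using m(1) ab unfolding exponent_vectors_def by auto
  next
    fix m assume "m \<in> ?Y"
    then show "(m(b := m b - 1))(b := Suc ((m(b := m b - 1)) b)) = m" by auto
  next
    fix m assume "m \<in> exponent_vectors a b k"
    then show "(m(b := Suc (m b)))(b := (m(b := Suc (m b))) b - 1) = m" by auto
  next
    fix m assume "m \<in> ?Y"
    then show "?P b ((m(b := m b - 1))(b := Suc ((m(b := m b - 1)) b))) = ?P b m" by simp
  qed
  also have "\<dots> = (\<Sum>m\<in>exponent_vectors a b k. z b * ?P b m)"
  proof (rule sum.cong[OF refl])
    fix m
    have "?P (b - 1) (m(b := Suc (m b))) = ?P (b - 1) m" by (rule prod.cong) auto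
    then show "?P b (m(b := Suc (m b))) = z b * ?P b m"
      unfolding ins using bn by (simp add: mult.assoc)
  qed
  finally show ?thesis unfolding hsym_exponent_vectors by (simp add: sum_distrib_left)
qed

lemma hsym_Suc:
  assumes ab: "a \<le> b"
  shows "hsym z a b (Suc k) = hsym z a (b - 1) (Suc k) + z b * hsym z a b k"
proof -
  let ?P = "\<lambda>c m. \<Prod>i\<in>{a..c}. z i ^ m i"
  let ?X = "{m \<in> exponent_vectors a b (Suc k). m b = 0}"
  let ?Y = "{m \<in> exponent_vectors a b (Suc k). m b \<noteq> 0}"
  have split: "exponent_vectors a b (Suc k) = ?X \<union> ?Y" by auto
  have "finite ?X" "finite ?Y" using finite_exponent_vectors[of a b "Suc k"] by auto
  then have "hsym z a b (Suc k) = sum (?P b) ?X + sum (?P b) ?Y"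
    unfolding hsym_exponent_vectors by (subst split, rule sum.union_disjoint) auto
  also have "sum (?P b) ?X = hsym z a (b - 1) (Suc k)"
  proof -
    have "sum (?P b) ?X = sum (?P (b - 1)) ?X"
      by (intro sum.cong refl) (simp add: interval_insert_top[OF ab])
    then show ?thesis unfolding hsym_exponent_vectors exponent_vectors_top_zero[OF ab] .
  qed
  also have "sum (?P b) ?Y = z b * hsym z a b k" by (rule sum_exponent_vectors_top_pos[OF ab])
  finally show ?thesis .
qed

section \<open>The generating function of a single column\<close>

lemma alternating_convolution_Suc:
  fixes e e' h h' :: "nat \<Rightarrow> 'a::comm_ring_1"
  assumes e0: "e 0 = e' 0" and eS: "\<And>i. e (Suc i) = e' (Suc i) + y * e' i"
    and h0: "h 0 = h' 0" and hS: "\<And>m. h (Suc m) = h' (Suc m) + z * h m"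
  shows "(\<Sum>i\<in>{0..Suc k}. (-1)^(Suc k - i) * e i * h (Suc k - i)) =
     (\<Sum>i\<in>{0..Suc k}. (-1)^(Suc k - i) * e' i * h' (Suc k - i)) +
     (y - z) * (\<Sum>i\<in>{0..k}. (-1)^(k - i) * e' i * h (k - i))"
proof -
  let ?B = "\<Sum>i\<in>{0..k}. (-1)^(k - i) * e' i * h (k - i)"
  have "(\<Sum>i\<in>{0..Suc k}. (-1)^(Suc k - i) * e i * h (Suc k - i)) =
      (-1)^(Suc k) * e 0 * h (Suc k) + (\<Sum>i\<in>{0..k}. (-1)^(k - i) * e (Suc i) * h (k - i))"
    by (subst sum.atLeast0_atMost_Suc_shift) simp
  also have "\<dots> = (-1)^(Suc k) * e' 0 * h (Suc k) +
      (\<Sum>i\<in>{0..k}. (-1)^(k - i) * e' (Suc i) * h (k - i)) + y * ?B"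
    by (simp add: e0 eS algebra_simps sum.distrib sum_distrib_left)
  also have "\<dots> = (\<Sum>i\<in>{0..Suc k}. (-1)^(Suc k - i) * e' i * h (Suc k - i)) + y * ?B"
    by (subst sum.atLeast0_atMost_Suc_shift) simp
  also have "(\<Sum>i\<in>{0..Suc k}. (-1)^(Suc k - i) * e' i * h (Suc k - i)) =
      (\<Sum>i\<in>{0..k}. (-1)^(Suc k - i) * e' i * h (Suc k - i)) + e' (Suc k) * h 0"
    by simp
  also have "(\<Sum>i\<in>{0..k}. (-1)^(Suc k - i) * e' i * h (Suc k - i)) =
      (\<Sum>i\<in>{0..k}. (-1)^(Suc k - i) * e' i * h' (Suc k - i) - z * ((-1)^(k - i) * e' i * h (k - i)))"
  proof (rule sum.cong[OF refl])
    fix i assume "i \<in> {0..k}"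
    then have i: "Suc k - i = Suc (k - i)" by auto
    show "(-1)^(Suc k - i) * e' i * h (Suc k - i) =
        (-1)^(Suc k - i) * e' i * h' (Suc k - i) - z * ((-1)^(k - i) * e' i * h (k - i))"
      unfolding i by (simp add: hS algebra_simps)
  qed
  also have "(\<Sum>i\<in>{0..k}. (-1)^(Suc k - i) * e' i * h' (Suc k - i) - z * ((-1)^(k - i) * e' i * h (k - i))) =
      (\<Sum>i\<in>{0..Suc k}. (-1)^(Suc k - i) * e' i * h' (Suc k - i)) - e' (Suc k) * h' 0 - z * ?B"
    by (simp add: sum_subtractf sum_distrib_left)
  finally show ?thesis using h0 by (simp add: algebra_simps)
qed

definition rank_in :: "int set \<Rightarrow> int \<Rightarrow> nat" where
  "rank_in S s = card {x \<in> S. x < s}"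

text \<open>The entries \<open>s\<close> of a column form a set \<open>S\<close>; the entry of rank \<open>k\<close> sits
  \<open>k\<close> rows below the top, so its content is the content \<open>c\<close> of the top cell minus \<open>k\<close>.\<close>

definition column_sum :: "(int \<Rightarrow> 'a::comm_ring_1) \<Rightarrow> (int \<Rightarrow> 'a) \<Rightarrow> int \<Rightarrow> int \<Rightarrow> int \<Rightarrow> int \<Rightarrow> 'a" where
  "column_sum y z c a b l = (\<Sum>S | S \<subseteq> {a..b} \<and> int (card S) = l.
      \<Prod>s\<in>S. y s - z (s + c - int (rank_in S s)))"

lemma column_sum_Suc:
  assumes ab: "a \<le> b"
  shows "column_sum y z c a b (int (Suc k)) =
     column_sum y z c a (b - 1) (int (Suc k)) + (y b - z (b + c - int k)) * column_sum y z c a (b - 1) (int k)"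
proof -
  let ?f = "\<lambda>S. \<Prod>s\<in>S. y s - z (s + c - int (rank_in S s))"
  have "\<And>S. S \<subseteq> {a..b - 1} \<Longrightarrow> card S = k \<Longrightarrow> ?f (insert b S) = (y b - z (b + c - int k)) * ?f S"
  proof -
    fix S assume S: "S \<subseteq> {a..b - 1}" "card S = k"
    then have "finite S" "b \<notin> S" using finite_subset by auto
    moreover have "{x \<in> insert b S. x < b} = S" using S(1) by auto
    then have "rank_in (insert b S) b = k" unfolding rank_in_def using S(2) by simp
    moreover have "\<And>s. s \<in> S \<Longrightarrow> {x \<in> insert b S. x < s} = {x \<in> S. x < s}"
      using S(1) by force
    then have "\<And>s. s \<in> S \<Longrightarrow> rank_in (insert b S) s = rank_in S s"
      unfolding rank_in_def by simp
    ultimately show "?f (insert b S) = (y b - z (b + c - int k)) * ?f S"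
      by (simp cong: prod.cong)
  qed
  then show ?thesis
    unfolding column_sum_def of_nat_eq_iff interval_insert_top[OF ab] sum_distrib_left
    by (subst sum_subsets_insert) (auto intro!: sum.cong)
qed

lemma column_sum_0 [simp]: "column_sum y z c a b 0 = 1"
proof -
  have "{S. S \<subseteq> {a..b} \<and> int (card S) = 0} = {{}}"
    by (auto dest: finite_subset[OF _ finite_atLeastAtMost_int])
  then show ?thesis unfolding column_sum_def by simp
qed

lemma column_sum_eq_0: "l < 0 \<or> max 0 (b - a + 1) < l \<Longrightarrow> column_sum y z c a b l = 0"
proof -
  assume l: "l < 0 \<or> max 0 (b - a + 1) < l"
  have "{S. S \<subseteq> {a..b} \<and> int (card S) = l} = {}"
  proof (rule ccontr)
    assume "{S. S \<subseteq> {a..b} \<and> int (card S) = l} \<noteq> {}"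
    then obtain S where S: "S \<subseteq> {a..b}" "int (card S) = l" by auto
    then have "card S \<le> card {a..b}" by (intro card_mono) auto
    then show False using S l by auto
  qed
  note empty = this
  show ?thesis unfolding column_sum_def empty by simp
qed

lemma esup_nat: "esup y z a b a' b' (int n) =
    (\<Sum>i\<in>{0..n}. (-1)^(n - i) * esym y a b i * hsym z a' b' (n - i))"
  unfolding esup_def by simp

lemma esup_eq_0_if_too_long:
  assumes "b - a + 1 < int (Suc k)"
  shows "esup y z a b (a + c) (b + c - int (Suc k) + 1) (int (Suc k)) = 0"
  unfolding esup_nat
proof (intro sum.neutral ballI)
  fix i assume "i \<in> {0..Suc k}"
  then have "nat (b - a + 1) < i \<or> (i < Suc k \<and> b + c - int (Suc k) + 1 < a + c)"
    using assms by auto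
  then show "(-1) ^ (Suc k - i) * esym y a b i * hsym z (a + c) (b + c - int (Suc k) + 1) (Suc k - i) = 0"
    by (auto simp: esym_eq_0_if_too_many hsym_empty)
qed

lemma column_sum_eq_esup_degenerate:
  assumes "l \<le> 0 \<or> b - a + 1 < l"
  shows "column_sum y z c a b l = esup y z a b (a + c) (b + c - l + 1) l"
proof (cases "0 < l")
  case True
  define k where "k = nat l - 1"
  have "l = int (Suc k)" using True unfolding k_def by simp
  then show ?thesis
    using esup_eq_0_if_too_long[of b a k y z c] column_sum_eq_0[of l b a y z c] assms True by simp
qed (use assms in \<open>auto simp: column_sum_eq_0 esup_def\<close>)

text \<open>Both sides satisfy the same recursion in \<open>b\<close>.\<close>

lemma column_sum_eq_esup: "column_sum y z c a b l = esup y z a b (a + c) (b + c - l + 1) l"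
proof (induction "nat (b - a + 1)" arbitrary: b l)
  case 0
  then show ?case by (intro column_sum_eq_esup_degenerate) auto
next
  case (Suc N)
  show ?case
  proof (cases "l \<le> 0 \<or> b - a + 1 < l")
    case True
    then show ?thesis by (rule column_sum_eq_esup_degenerate)
  next
    case False
    define k where "k = nat l - 1"
    have k: "l = int (Suc k)" and ab: "a \<le> b" and kb: "int k \<le> b - a"
      using False unfolding k_def by auto
    define \<beta> where "\<beta> = b + c - int k"
    have N: "N = nat (b - 1 - a + 1)" using Suc.hyps(2) by simp
    have IH1: "column_sum y z c a (b - 1) (int (Suc k)) = esup y z a (b - 1) (a + c) (\<beta> - 1) (int (Suc k))"
      using Suc.hyps(1)[OF N, of "int (Suc k)"] unfolding \<beta>_def by (simp add: algebra_simps)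
    have IH2: "column_sum y z c a (b - 1) (int k) = esup y z a (b - 1) (a + c) \<beta> (int k)"
      using Suc.hyps(1)[OF N, of "int k"] unfolding \<beta>_def by (simp add: algebra_simps)
    have cb: "a + c \<le> \<beta>" using kb unfolding \<beta>_def by simp
    have "column_sum y z c a b l =
        column_sum y z c a (b - 1) (int (Suc k)) + (y b - z \<beta>) * column_sum y z c a (b - 1) (int k)"
      unfolding k \<beta>_def by (rule column_sum_Suc[OF ab])
    also have "\<dots> = esup y z a b (a + c) \<beta> (int (Suc k))"
      unfolding IH1 IH2 esup_nat
      by (rule alternating_convolution_Suc[symmetric]) (simp_all add: esym_Suc[OF ab] hsym_Suc[OF cb])
    also have "\<dots> = esup y z a b (a + c) (b + c - l + 1) l"
      unfolding \<beta>_def k by (simp add: algebra_simps)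
    finally show ?thesis .
  qed
qed

lemma rank_in_mono: "finite X \<Longrightarrow> t \<le> u \<Longrightarrow> rank_in X t \<le> rank_in X u"
  unfolding rank_in_def by (rule card_mono) auto

lemma rank_in_le_card: "finite X \<Longrightarrow> rank_in X t \<le> card X"
  unfolding rank_in_def by (rule card_mono) auto

lemma rank_in_plus_1: "finite X \<Longrightarrow> rank_in X (t + 1) = rank_in X t + (if t \<in> X then 1 else 0)"
proof -
  assume f: "finite X"
  show ?thesis
  proof (cases "t \<in> X")
    case True
    have "{x \<in> X. x < t + 1} = insert t {x \<in> X. x < t}" using True by auto
    then show ?thesis unfolding rank_in_def using True f by simp
  next
    case False
    have "{x \<in> X. x < t + 1} = {x \<in> X. x < t}" using False by (auto, metis le_less)
    then show ?thesis unfolding rank_in_def using False by simp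
  qed
qed

lemma card_ge_part: "finite X \<Longrightarrow> card {x \<in> X. t \<le> x} = card X - rank_in X t"
proof -
  assume f: "finite X"
  have "X = {x \<in> X. x < t} \<union> {x \<in> X. t \<le> x}" by auto
  then have "card X = rank_in X t + card {x \<in> X. t \<le> x}"
    unfolding rank_in_def using f by (metis (no_types, lifting) card_Un_disjoint disjoint_iff
        finite_Un mem_Collect_eq not_less)
  then show ?thesis by simp
qed

lemma nth_sorted_list_of_set_less_iff:
  assumes "finite X" "i < card X" "k < card X"
  shows "sorted_list_of_set X ! i < sorted_list_of_set X ! k \<longleftrightarrow> i < k"
  using sorted_wrt_nth_less[OF strict_sorted_list_of_set, of i k X]
    sorted_wrt_nth_less[OF strict_sorted_list_of_set, of k i X] assms
  by (cases i k rule: linorder_cases) auto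

lemma nth_sorted_list_of_set_mem: "finite X \<Longrightarrow> k < card X \<Longrightarrow> sorted_list_of_set X ! k \<in> X"
  using nth_mem[of k "sorted_list_of_set X"] by simp

lemma rank_in_nth_sorted_list_of_set:
  assumes fin: "finite X" and k: "k < card X"
  shows "rank_in X (sorted_list_of_set X ! k) = k"
proof -
  let ?xs = "sorted_list_of_set X"
  have "{x \<in> X. x < ?xs ! k} = (\<lambda>i. ?xs ! i) ` {..<k}"
  proof (intro equalityI subsetI)
    fix x assume x: "x \<in> {x \<in> X. x < ?xs ! k}"
    then have "x \<in> set ?xs" using fin by simp
    then obtain i where "i < length ?xs" "?xs ! i = x" by (meson in_set_conv_nth)
    then have i: "i < card X" "?xs ! i = x" by simp_all
    then have "i < k" using x nth_sorted_list_of_set_less_iff[OF fin i(1) k] by simp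
    then show "x \<in> (\<lambda>i. ?xs ! i) ` {..<k}" using i by auto
  next
    fix x assume "x \<in> (\<lambda>i. ?xs ! i) ` {..<k}"
    then obtain i where "i < k" "x = ?xs ! i" by auto
    then show "x \<in> {x \<in> X. x < ?xs ! k}"
      using nth_sorted_list_of_set_less_iff[OF fin _ k, of i] nth_sorted_list_of_set_mem[OF fin, of i] k by auto
  qed
  moreover have "inj_on (\<lambda>i. ?xs ! i) {..<k}"
  proof (rule inj_onI)
    fix i i' assume "i \<in> {..<k}" "i' \<in> {..<k}" "?xs ! i = ?xs ! i'"
    then have "i < card X" "i' < card X" "?xs ! i = ?xs ! i'" using k by auto
    then show "i = i'" using nth_eq_iff_index_eq[OF distinct_sorted_list_of_set, of i X i'] by simp
  qed
  ultimately show ?thesis unfolding rank_in_def by (simp add: card_image)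
qed

lemma nth_sorted_list_of_set_rank_in:
  assumes fin: "finite X" and s: "s \<in> X"
  shows "rank_in X s < card X" "sorted_list_of_set X ! rank_in X s = s"
proof -
  have "s \<in> set (sorted_list_of_set X)" using fin s by simp
  then obtain i where "i < length (sorted_list_of_set X)" "sorted_list_of_set X ! i = s"
    by (meson in_set_conv_nth)
  then show "rank_in X s < card X" "sorted_list_of_set X ! rank_in X s = s"
    using rank_in_nth_sorted_list_of_set[OF fin] by auto
qed

lemma rank_in_strict_mono_column:
  fixes f :: "nat \<Rightarrow> int"
  assumes mono: "\<And>r r'. Suc m \<le> r \<Longrightarrow> r < r' \<Longrightarrow> r' \<le> l \<Longrightarrow> f r < f r'"
  shows "inj_on f {Suc m..l}" "card (f ` {Suc m..l}) = l - m"
    "\<And>r. r \<in> {Suc m..l} \<Longrightarrow> rank_in (f ` {Suc m..l}) (f r) = r - Suc m"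
proof -
  show inj: "inj_on f {Suc m..l}"
  proof (rule inj_onI)
    fix r r' assume "r \<in> {Suc m..l}" "r' \<in> {Suc m..l}" "f r = f r'"
    then show "r = r'" using mono[of r r'] mono[of r' r] by (cases "r < r'"; cases "r' < r") auto
  qed
  show "card (f ` {Suc m..l}) = l - m" using card_image[OF inj] by simp
  fix r assume r: "r \<in> {Suc m..l}"
  have "{x \<in> f ` {Suc m..l}. x < f r} = f ` {Suc m..<r}"
  proof (intro equalityI subsetI)
    fix x assume "x \<in> {x \<in> f ` {Suc m..l}. x < f r}"
    then obtain r' where r': "r' \<in> {Suc m..l}" "x = f r'" "f r' < f r" by auto
    have "r' < r"
    proof (rule ccontr)
      assume "\<not> r' < r"
      then have "f r \<le> f r'" using mono[of r r'] r r' by (cases "r = r'") auto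
      then show False using r' by simp
    qed
    then show "x \<in> f ` {Suc m..<r}" using r' by auto
  next
    fix x assume "x \<in> f ` {Suc m..<r}"
    then obtain r' where r': "r' \<in> {Suc m..<r}" "x = f r'" by auto
    then show "x \<in> {x \<in> f ` {Suc m..l}. x < f r}" using mono[of r' r] r by auto
  qed
  moreover have "inj_on f {Suc m..<r}" by (rule inj_on_subset[OF inj]) (use r in auto)
  ultimately show "rank_in (f ` {Suc m..l}) (f r) = r - Suc m"
    unfolding rank_in_def by (simp add: card_image)
qed

definition splice :: "int \<Rightarrow> int set \<Rightarrow> int set \<Rightarrow> int set" where
  "splice t X Y = {x \<in> X. x < t} \<union> {y \<in> Y. t \<le> y}"

lemma splice_splice: "splice t (splice t X Y) (splice t Y X) = X"
  unfolding splice_def by auto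

lemma rank_in_splice_le: "u \<le> t \<Longrightarrow> rank_in (splice t X Y) u = rank_in X u"
proof -
  assume "u \<le> t"
  then have "{x \<in> splice t X Y. x < u} = {x \<in> X. x < u}" unfolding splice_def by auto
  then show ?thesis unfolding rank_in_def by simp
qed

lemma rank_in_splice_ge:
  assumes fX: "finite X" and fY: "finite Y" and tu: "t \<le> u"
  shows "int (rank_in (splice t X Y) u) = int (rank_in X t) + int (rank_in Y u) - int (rank_in Y t)"
proof -
  have e1: "{x \<in> splice t X Y. x < u} = {x \<in> X. x < t} \<union> {x \<in> Y. t \<le> x \<and> x < u}"
    using tu unfolding splice_def by auto
  have c1: "card ({x \<in> X. x < t} \<union> {x \<in> Y. t \<le> x \<and> x < u}) =
      card {x \<in> X. x < t} + card {x \<in> Y. t \<le> x \<and> x < u}"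
    by (rule card_Un_disjoint) (use fX fY in auto)
  have e2: "{x \<in> Y. x < u} = {x \<in> Y. x < t} \<union> {x \<in> Y. t \<le> x \<and> x < u}"
    using tu by auto
  have c2: "card ({x \<in> Y. x < t} \<union> {x \<in> Y. t \<le> x \<and> x < u}) =
      card {x \<in> Y. x < t} + card {x \<in> Y. t \<le> x \<and> x < u}"
    by (rule card_Un_disjoint) (use fY in auto)
  show ?thesis unfolding rank_in_def e1 c1 using e2 c2 by simp
qed

lemma card_splice:
  assumes "finite X" "finite Y"
  shows "int (card (splice t X Y)) = int (rank_in X t) + int (card Y) - int (rank_in Y t)"
proof -
  have "card (splice t X Y) = rank_in X t + card {y \<in> Y. t \<le> y}"
    unfolding splice_def rank_in_def by (rule card_Un_disjoint) (use assms in auto)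
  then show ?thesis using card_ge_part[OF assms(2)] rank_in_le_card[OF assms(2), of t] by simp
qed

lemma prod_splice:
  assumes "finite X" "finite Y"
  shows "(\<Prod>s\<in>splice t X Y. f s) = (\<Prod>s | s \<in> X \<and> s < t. f s) * (\<Prod>s | s \<in> Y \<and> t \<le> s. f s)"
  unfolding splice_def by (rule prod.union_disjoint) (use assms in auto)

lemma prod_eq_by_two_factors:
  assumes "finite I" "j \<in> I" "k \<in> I" "j \<noteq> k"
    and "\<And>i. i \<in> I \<Longrightarrow> i \<noteq> j \<Longrightarrow> i \<noteq> k \<Longrightarrow> f i = g i"
    and "f j * f k = g j * (g k :: 'a::comm_monoid_mult)"
  shows "prod f I = prod g I"
proof -
  have "prod h I = h j * h k * prod h (I - {j} - {k})" for h :: "_ \<Rightarrow> 'a"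
    using assms(1-4) prod.remove[of I j h] prod.remove[of "I - {j}" k h] by (simp add: mult.assoc)
  moreover have "prod f (I - {j} - {k}) = prod g (I - {j} - {k})" using assms(5) by (intro prod.cong) auto
  ultimately show ?thesis using assms(6) by metis
qed

section \<open>The Lindstr\<ouml>m--Gessel--Viennot lemma\<close>

text \<open>Source \<open>j\<close> is the lattice point \<open>(A j, st j)\<close> and sink \<open>i\<close> is \<open>(B i + 1, en i)\<close>.
  A path from source \<open>j\<close> to sink \<open>i\<close> takes one step at each abscissa of \<open>[A j, B i]\<close>, rising
  by one exactly at the abscissae in a set \<open>S\<close>; a rising step at abscissa \<open>s\<close> from height \<open>h\<close>
  has weight \<open>F s h\<close>.\<close>

locale lgv =
  fixes n :: nat and A B st en :: "nat \<Rightarrow> int" and F :: "int \<Rightarrow> int \<Rightarrow> 'a::comm_ring_1"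
begin

definition height :: "nat \<Rightarrow> int set \<Rightarrow> int \<Rightarrow> int" where
  "height j S t = st j + int (rank_in S t)"

definition paths :: "nat \<Rightarrow> nat \<Rightarrow> int set set" where
  "paths j i = {S. S \<subseteq> {A j..B i} \<and> int (card S) = en i - st j}"

definition path_weight :: "nat \<Rightarrow> int set \<Rightarrow> 'a" where
  "path_weight j S = (\<Prod>s\<in>S. F s (height j S s))"

definition path_points :: "nat \<Rightarrow> nat \<Rightarrow> int set \<Rightarrow> (int \<times> int) set" where
  "path_points j i S = {(t, height j S t) | t. A j \<le> t \<and> t \<le> B i + 1}"

definition families :: "((nat \<Rightarrow> nat) \<times> (nat \<Rightarrow> int set)) set" where
  "families = (SIGMA p:{p. p permutes {0..<n}}. PiE {0..<n} (\<lambda>j. paths j (p j)))"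

abbreviation points :: "(nat \<Rightarrow> nat) \<Rightarrow> (nat \<Rightarrow> int set) \<Rightarrow> nat \<Rightarrow> (int \<times> int) set" where
  "points p S j \<equiv> path_points j (p j) (S j)"

fun signed_weight :: "(nat \<Rightarrow> nat) \<times> (nat \<Rightarrow> int set) \<Rightarrow> 'a" where
  "signed_weight (p, S) = of_int (sign p) * (\<Prod>j<n. path_weight j (S j))"

definition meets_another :: "(nat \<Rightarrow> nat) \<Rightarrow> (nat \<Rightarrow> int set) \<Rightarrow> nat \<Rightarrow> bool" where
  "meets_another p S j \<longleftrightarrow> j < n \<and> (\<exists>k<n. k \<noteq> j \<and> points p S j \<inter> points p S k \<noteq> {})"

fun intersecting :: "(nat \<Rightarrow> nat) \<times> (nat \<Rightarrow> int set) \<Rightarrow> bool" where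
  "intersecting (p, S) \<longleftrightarrow> (\<exists>j. meets_another p S j)"

text \<open>The involution of the LGV argument: take the least path \<open>j\<close> meeting another one, its first
  meeting abscissa \<open>t\<close>, and the least path \<open>k\<close> meeting it there; exchange the tails after \<open>t\<close>.\<close>

fun tail_swap :: "nat \<Rightarrow> nat \<Rightarrow> int \<Rightarrow> (nat \<Rightarrow> nat) \<times> (nat \<Rightarrow> int set) \<Rightarrow> (nat \<Rightarrow> nat) \<times> (nat \<Rightarrow> int set)" where
  "tail_swap j k t (p, S) =
     (p \<circ> Transposition.transpose j k, S(j := splice t (S j) (S k), k := splice t (S k) (S j)))"

definition first_meeting_path :: "(nat \<Rightarrow> nat) \<Rightarrow> (nat \<Rightarrow> int set) \<Rightarrow> nat" where
  "first_meeting_path p S = (LEAST j. meets_another p S j)"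

definition meeting_abscissae :: "(nat \<Rightarrow> nat) \<Rightarrow> (nat \<Rightarrow> int set) \<Rightarrow> int set" where
  "meeting_abscissae p S = {t. \<exists>k<n. k \<noteq> first_meeting_path p S \<and>
     (\<exists>h. (t, h) \<in> points p S (first_meeting_path p S) \<inter> points p S k)}"

definition first_meeting :: "(nat \<Rightarrow> nat) \<Rightarrow> (nat \<Rightarrow> int set) \<Rightarrow> int" where
  "first_meeting p S = Min (meeting_abscissae p S)"

definition meets_first_at :: "(nat \<Rightarrow> nat) \<Rightarrow> (nat \<Rightarrow> int set) \<Rightarrow> nat \<Rightarrow> bool" where
  "meets_first_at p S k \<longleftrightarrow> k < n \<and> k \<noteq> first_meeting_path p S \<and>
     (\<exists>h. (first_meeting p S, h) \<in> points p S (first_meeting_path p S) \<inter> points p S k)"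

definition partner_path :: "(nat \<Rightarrow> nat) \<Rightarrow> (nat \<Rightarrow> int set) \<Rightarrow> nat" where
  "partner_path p S = (LEAST k. meets_first_at p S k)"

fun switch :: "(nat \<Rightarrow> nat) \<times> (nat \<Rightarrow> int set) \<Rightarrow> (nat \<Rightarrow> nat) \<times> (nat \<Rightarrow> int set)" where
  "switch (p, S) = tail_swap (first_meeting_path p S) (partner_path p S) (first_meeting p S) (p, S)"

lemma path_points_iff: "(u, v) \<in> path_points j i S \<longleftrightarrow> A j \<le> u \<and> u \<le> B i + 1 \<and> v = height j S u"
  unfolding path_points_def by auto

lemma families_D:
  assumes "(p, S) \<in> families"
  shows "p permutes {0..<n}" "S \<in> extensional {0..<n}"
    and "j < n \<Longrightarrow> S j \<subseteq> {A j..B (p j)}" "j < n \<Longrightarrow> int (card (S j)) = en (p j) - st j"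
    and "j < n \<Longrightarrow> finite (S j)"
  using assms finite_subset[of "S j" "{A j..B (p j)}"]
  unfolding families_def paths_def by (auto simp: PiE_iff)

lemma finite_paths: "finite (paths j i)"
  unfolding paths_def by (rule finite_subset[of _ "Pow {A j..B i}"]) auto

lemma finite_families: "finite families"
  unfolding families_def by (intro finite_SigmaI finite_PiE finite_permutations) (auto simp: finite_paths)

lemma det_eq_sum_families:
  assumes M: "M \<in> carrier_mat n n"
    and entries: "\<And>i j. i < n \<Longrightarrow> j < n \<Longrightarrow> M $$ (i, j) = (\<Sum>S\<in>paths j i. path_weight j S)"
  shows "det M = (\<Sum>x\<in>families. signed_weight x)"
proof -
  have "det M = det (transpose_mat M)" using det_transpose[OF M] by simp
  also have "\<dots> = (\<Sum>p | p permutes {0..<n}. of_int (sign p) * (\<Prod>j = 0..<n. transpose_mat M $$ (j, p j)))"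
    by (rule det_def') (use M in simp)
  also have "\<dots> = (\<Sum>p | p permutes {0..<n}. of_int (sign p) *
        (\<Sum>S\<in>PiE {0..<n} (\<lambda>j. paths j (p j)). \<Prod>j = 0..<n. path_weight j (S j)))"
  proof (intro sum.cong refl arg_cong2[where f = "(*)"])
    fix p assume "p \<in> {p. p permutes {0..<n}}"
    then have "\<And>j. j < n \<Longrightarrow> p j < n" by (auto dest: permutes_in_image)
    then have "(\<Prod>j = 0..<n. transpose_mat M $$ (j, p j)) = (\<Prod>j = 0..<n. \<Sum>S\<in>paths j (p j). path_weight j S)"
      using M by (intro prod.cong) (auto simp: entries)
    also have "\<dots> = (\<Sum>S\<in>PiE {0..<n} (\<lambda>j. paths j (p j)). \<Prod>j = 0..<n. path_weight j (S j))"
      by (rule prod_sum_PiE) (auto simp: finite_paths)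
    finally show "(\<Prod>j = 0..<n. transpose_mat M $$ (j, p j)) = \<dots>" .
  qed
  also have "\<dots> = (\<Sum>(p, S)\<in>families. signed_weight (p, S))"
    unfolding families_def sum_distrib_left
    by (subst sum.Sigma) (auto simp: finite_permutations finite_paths atLeast0LessThan intro!: finite_PiE)
  finally show ?thesis by (simp only: case_prod_eta)
qed

lemma height_splice_le: "u \<le> t \<Longrightarrow> height j (splice t X Y) u = height j X u"
  unfolding height_def by (simp add: rank_in_splice_le)

lemma height_splice_ge:
  assumes "finite X" "finite Y" "t \<le> u" "height j X t = height k Y t"
  shows "height j (splice t X Y) u = height k Y u"
  using rank_in_splice_ge[OF assms(1-3)] assms(4) unfolding height_def by simp

lemma path_points_splice:
  assumes "finite X" "finite Y" "(t, h) \<in> path_points j i X" "(t, h) \<in> path_points k i' Y"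
  shows "path_points j i' (splice t X Y) =
    {v \<in> path_points j i X. fst v \<le> t} \<union> {v \<in> path_points k i' Y. t \<le> fst v}"
proof -
  have t: "A j \<le> t" "t \<le> B i + 1" "A k \<le> t" "t \<le> B i' + 1" "height j X t = height k Y t"
    using assms(3,4) by (auto simp: path_points_iff)
  have "(u, v) \<in> path_points j i' (splice t X Y) \<longleftrightarrow>
      (u, v) \<in> {v \<in> path_points j i X. fst v \<le> t} \<union> {v \<in> path_points k i' Y. t \<le> fst v}" for u v
  proof (cases "u \<le> t")
    case True
    then show ?thesis using t by (auto simp: path_points_iff height_splice_le)
  next
    case False
    then show ?thesis using t height_splice_ge[OF assms(1,2), of t u j k]
      by (auto simp: path_points_iff)
  qed
  then show ?thesis by auto
qed

lemma path_weight_splice: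
  assumes "finite X" "finite Y" "height j X t = height k Y t"
  shows "path_weight j (splice t X Y) =
    (\<Prod>s | s \<in> X \<and> s < t. F s (height j X s)) * (\<Prod>s | s \<in> Y \<and> t \<le> s. F s (height k Y s))"
  unfolding path_weight_def prod_splice[OF assms(1,2)]
  using height_splice_le height_splice_ge[OF assms(1,2) _ assms(3)]
  by (intro arg_cong2[where f = "(*)"] prod.cong) auto

lemma path_weight_split:
  assumes "finite X"
  shows "path_weight j X = (\<Prod>s | s \<in> X \<and> s < t. F s (height j X s)) * (\<Prod>s | s \<in> X \<and> t \<le> s. F s (height j X s))"
proof -
  have "splice t X X = X" unfolding splice_def by auto
  then show ?thesis using path_weight_splice[OF assms assms refl, of j t] by simp
qed

lemma splice_in_paths:
  assumes "X \<in> paths j i" "Y \<in> paths k i'" and "A j \<le> t" "t \<le> B i' + 1" "height j X t = height k Y t"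
  shows "splice t X Y \<in> paths j i'"
proof -
  have "finite X" "finite Y"
    using assms(1,2) finite_subset unfolding paths_def by auto
  then show ?thesis
    using assms card_splice[of X Y t] unfolding paths_def height_def splice_def by auto
qed

context
  fixes p S j k t h
  assumes x: "(p, S) \<in> families" and jk: "j < n" "k < n" "j \<noteq> k"
    and meet: "(t, h) \<in> points p S j" "(t, h) \<in> points p S k"
begin

private lemma finite_jk: "finite (S j)" "finite (S k)"
  using families_D(5)[OF x] jk by auto

private lemma heights_meet: "height j (S j) t = height k (S k) t"
  using meet by (auto simp: path_points_iff)

lemma tail_swap_in_families: "tail_swap j k t (p, S) \<in> families"
proof -
  have p': "p \<circ> Transposition.transpose j k permutes {0..<n}"
    using permutes_compose[OF permutes_swap_id families_D(1)[OF x]] jk by simp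
  have "S j \<in> paths j (p j)" "S k \<in> paths k (p k)"
    using families_D(3,4)[OF x] jk unfolding paths_def by auto
  then have "splice t (S j) (S k) \<in> paths j (p k)" "splice t (S k) (S j) \<in> paths k (p j)"
    using meet heights_meet by (auto intro!: splice_in_paths simp: path_points_iff)
  moreover have "S m \<in> paths m (p m)" if "m < n" for m
    using families_D(3,4)[OF x that] unfolding paths_def by auto
  ultimately show ?thesis
    using p' jk families_D(2)[OF x] unfolding families_def
    by (auto simp: PiE_iff extensional_def Transposition.transpose_def)
qed

lemma points_tail_swap:
  assumes "tail_swap j k t (p, S) = (p', S')"
  shows "points p' S' j = {v \<in> points p S j. fst v \<le> t} \<union> {v \<in> points p S k. t \<le> fst v}"
    and "points p' S' k = {v \<in> points p S k. fst v \<le> t} \<union> {v \<in> points p S j. t \<le> fst v}"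
    and "m \<noteq> j \<Longrightarrow> m \<noteq> k \<Longrightarrow> points p' S' m = points p S m"
  using assms jk path_points_splice[OF finite_jk meet] path_points_splice[OF finite_jk(2,1) meet(2,1)]
  by (auto simp: Transposition.transpose_def)

lemma signed_weight_tail_swap: "signed_weight (tail_swap j k t (p, S)) = - signed_weight (p, S)"
proof -
  let ?S' = "S(j := splice t (S j) (S k), k := splice t (S k) (S j))"
  have "(of_int (sign (p \<circ> Transposition.transpose j k)) :: 'a) =
      of_int (sign p) * of_int (sign (Transposition.transpose j k))"
    by (rule signof_compose[OF families_D(1)[OF x] permutes_swap_id]) (use jk in auto)
  then have "(of_int (sign (p \<circ> Transposition.transpose j k)) :: 'a) = - of_int (sign p)"
    using jk by (simp add: sign_swap_id)
  moreover have "(\<Prod>i<n. path_weight i (?S' i)) = (\<Prod>i<n. path_weight i (S i))"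
  proof (rule prod_eq_by_two_factors[of _ j k])
    show "path_weight j (?S' j) * path_weight k (?S' k) = path_weight j (S j) * path_weight k (S k)"
      using jk(3) path_weight_splice[OF finite_jk heights_meet]
        path_weight_splice[OF finite_jk(2,1) heights_meet[symmetric]]
        path_weight_split[OF finite_jk(1), of j t] path_weight_split[OF finite_jk(2), of k t]
      by (simp add: ac_simps)
  qed (use jk in auto)
  ultimately show ?thesis by simp
qed

end

lemma tail_swap_involutive: "j \<noteq> k \<Longrightarrow> tail_swap j k t (tail_swap j k t (p, S)) = (p, S)"
  by (auto simp: o_assoc[symmetric] splice_splice)

lemma first_meeting_path:
  assumes "intersecting (p, S)"
  shows "meets_another p S (first_meeting_path p S)"
    and "m < first_meeting_path p S \<Longrightarrow> \<not> meets_another p S m"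
  using assms LeastI_ex[of "meets_another p S"] not_less_Least[of m "meets_another p S"]
  unfolding first_meeting_path_def by auto

lemma first_meeting:
  assumes "intersecting (p, S)"
  shows "first_meeting p S \<in> meeting_abscissae p S"
    and "s \<in> meeting_abscissae p S \<Longrightarrow> first_meeting p S \<le> s"
proof -
  let ?j = "first_meeting_path p S"
  have fin: "finite (meeting_abscissae p S)"
    by (rule finite_subset[of _ "{A ?j..B (p ?j) + 1}"]) (auto simp: meeting_abscissae_def path_points_iff)
  obtain k w where "k < n" "k \<noteq> ?j" "w \<in> points p S ?j \<inter> points p S k"
    using first_meeting_path(1)[OF assms] unfolding meets_another_def by blast
  then have "fst w \<in> meeting_abscissae p S"
    unfolding meeting_abscissae_def by (cases w) auto
  then show "first_meeting p S \<in> meeting_abscissae p S"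
    unfolding first_meeting_def using fin by (intro Min_in) auto
  show "s \<in> meeting_abscissae p S \<Longrightarrow> first_meeting p S \<le> s"
    unfolding first_meeting_def using fin by simp
qed

lemma partner_path:
  assumes "intersecting (p, S)"
  shows "meets_first_at p S (partner_path p S)" and "first_meeting_path p S < partner_path p S"
proof -
  let ?j = "first_meeting_path p S"
  obtain k where "meets_first_at p S k"
    using first_meeting(1)[OF assms] unfolding meeting_abscissae_def meets_first_at_def by auto
  then show P: "meets_first_at p S (partner_path p S)"
    unfolding partner_path_def by (rule LeastI)
  then obtain h where k: "partner_path p S < n" "partner_path p S \<noteq> ?j"
      "(first_meeting p S, h) \<in> points p S ?j" "(first_meeting p S, h) \<in> points p S (partner_path p S)"
    unfolding meets_first_at_def by auto
  have "?j < n" using first_meeting_path(1)[OF assms] unfolding meets_another_def by simp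
  then have "meets_another p S (partner_path p S)"
    unfolding meets_another_def using k by (intro conjI exI[of _ ?j]) auto
  then show "?j < partner_path p S"
    using first_meeting_path(2)[OF assms] k(2) by (meson linorder_neqE_nat)
qed

lemma meets_another_iff_Union:
  "meets_another p S m \<longleftrightarrow> m < n \<and> points p S m \<inter> (\<Union>q\<in>{q. q < n \<and> q \<noteq> m}. points p S q) \<noteq> {}"
  unfolding meets_another_def by blast

text \<open>The three choices defining \<open>switch\<close> are the same before and after exchanging the tails:
  paths other than \<open>j\<close> and \<open>k\<close> are untouched, the union of paths \<open>j\<close> and \<open>k\<close> is unchanged, and
  nothing changes before the abscissa \<open>t\<close> of the exchange.\<close>

context
  fixes p S p' S'
  assumes x: "(p, S) \<in> families" and bad: "intersecting (p, S)"
    and x': "tail_swap (first_meeting_path p S) (partner_path p S) (first_meeting p S) (p, S) = (p', S')"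
begin

private lemma exchange_indices:
  "first_meeting_path p S < partner_path p S" "partner_path p S < n" "first_meeting_path p S < n"
  using partner_path[OF bad] unfolding meets_first_at_def by auto

private lemma exchange_point:
  "(first_meeting p S, height (first_meeting_path p S) (S (first_meeting_path p S)) (first_meeting p S))
     \<in> points p S (first_meeting_path p S)"
  "(first_meeting p S, height (first_meeting_path p S) (S (first_meeting_path p S)) (first_meeting p S))
     \<in> points p S (partner_path p S)"
  using partner_path(1)[OF bad] unfolding meets_first_at_def by (auto simp: path_points_iff)

private lemmas points_exchanged =
  points_tail_swap[OF x exchange_indices(3,2) less_imp_neq[OF exchange_indices(1)] exchange_point x']

private lemma exchange_point':
  "(first_meeting p S, height (first_meeting_path p S) (S (first_meeting_path p S)) (first_meeting p S))
     \<in> points p' S' (first_meeting_path p S)"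
  "(first_meeting p S, height (first_meeting_path p S) (S (first_meeting_path p S)) (first_meeting p S))
     \<in> points p' S' (partner_path p S)"
  using exchange_point unfolding points_exchanged(1,2) by auto

lemma first_meeting_path_switch: "first_meeting_path p' S' = first_meeting_path p S"
proof -
  let ?j = "first_meeting_path p S" and ?k = "partner_path p S"
  have "(\<Union>q\<in>Q. points p' S' q) = (\<Union>q\<in>Q. points p S q)" if "?j \<in> Q" "?k \<in> Q" for Q
  proof -
    have split: "(\<Union>q\<in>Q. f q) = f ?j \<union> f ?k \<union> (\<Union>q\<in>Q - {?j, ?k}. f q)" for f :: "nat \<Rightarrow> (int \<times> int) set"
      using that by auto
    have "points p' S' ?j \<union> points p' S' ?k = points p S ?j \<union> points p S ?k"
      unfolding points_exchanged(1,2) by auto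
    moreover have "(\<Union>q\<in>Q - {?j, ?k}. points p' S' q) = (\<Union>q\<in>Q - {?j, ?k}. points p S q)"
      using points_exchanged(3) by (intro SUP_cong) auto
    ultimately show ?thesis unfolding split[of "points p' S'"] split[of "points p S"] by simp
  qed
  then have other: "meets_another p' S' m \<longleftrightarrow> meets_another p S m" if "m \<noteq> ?j" "m \<noteq> ?k" for m
    using that exchange_indices points_exchanged(3)[OF that] unfolding meets_another_iff_Union by simp
  have "meets_another p' S' ?j"
    using exchange_point' exchange_indices unfolding meets_another_def by (intro conjI exI[of _ ?k]) auto
  moreover have "\<not> meets_another p' S' m" if "m < ?j" for m
    using that other first_meeting_path(2)[OF bad] exchange_indices by auto
  ultimately show ?thesis
    unfolding first_meeting_path_def[of p' S'] by (intro Least_equality) (auto simp: not_less[symmetric])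
qed

lemma intersecting_switch: "intersecting (p', S')"
  using first_meeting_path(1)[OF bad] first_meeting_path_switch
  by (metis exchange_indices(1,2) exchange_point exchange_point' intersecting.simps
      meets_another_def disjoint_iff less_irrefl)

lemma first_meeting_switch: "first_meeting p' S' = first_meeting p S"
proof -
  let ?j = "first_meeting_path p S" and ?k = "partner_path p S" and ?t = "first_meeting p S"
  have below: "{v \<in> points p' S' m. fst v < ?t} = {v \<in> points p S m. fst v < ?t}" for m
    using points_exchanged(1,2) points_exchanged(3)[of m] exchange_indices
    by (cases "m = ?j"; cases "m = ?k") auto
  have "?t \<in> meeting_abscissae p' S'"
    using exchange_point exchange_point' exchange_indices
    unfolding meeting_abscissae_def first_meeting_path_switch by (intro CollectI exI[of _ ?k]) auto
  moreover have "?t \<le> s" if s: "s \<in> meeting_abscissae p' S'" for s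
  proof (rule ccontr)
    assume "\<not> ?t \<le> s"
    obtain q h where "q < n" "q \<noteq> ?j" "(s, h) \<in> points p' S' ?j" "(s, h) \<in> points p' S' q"
      using s unfolding meeting_abscissae_def first_meeting_path_switch by auto
    then have "(s, h) \<in> {v \<in> points p' S' ?j. fst v < ?t}" "(s, h) \<in> {v \<in> points p' S' q. fst v < ?t}"
      using \<open>\<not> ?t \<le> s\<close> by auto
    then have "(s, h) \<in> points p S ?j" "(s, h) \<in> points p S q" unfolding below by auto
    then have "s \<in> meeting_abscissae p S" using \<open>q < n\<close> \<open>q \<noteq> ?j\<close> unfolding meeting_abscissae_def by auto
    then show False using first_meeting(2)[OF bad] \<open>\<not> ?t \<le> s\<close> by simp
  qed
  ultimately show ?thesis
    using first_meeting[OF intersecting_switch] by (meson order_antisym)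
qed

lemma partner_path_switch: "partner_path p' S' = partner_path p S"
proof -
  let ?j = "first_meeting_path p S" and ?k = "partner_path p S" and ?t = "first_meeting p S"
  note h = exchange_point
  have at_t: "(?t, v) \<in> points p' S' m \<longleftrightarrow> (?t, v) \<in> points p S m" if "m \<noteq> ?k" for m v
    using that points_exchanged(1) points_exchanged(3)[of m] h exchange_indices
    by (cases "m = ?j") (auto simp: path_points_iff)
  have "meets_first_at p' S' m \<longleftrightarrow> meets_first_at p S m" for m
  proof (cases "m = ?k")
    case True
    then show ?thesis using h exchange_point' exchange_indices
      unfolding meets_first_at_def first_meeting_path_switch first_meeting_switch by auto
  next
    case False
    then show ?thesis using at_t[OF False] at_t[of ?j] exchange_indices
      unfolding meets_first_at_def first_meeting_path_switch first_meeting_switch by auto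
  qed
  then show ?thesis unfolding partner_path_def by presburger
qed

end

lemma switch:
  assumes x: "(p, S) \<in> families" and bad: "intersecting (p, S)"
  shows "switch (p, S) \<in> families" "intersecting (switch (p, S))"
    "switch (switch (p, S)) = (p, S)" "switch (p, S) \<noteq> (p, S)"
    "signed_weight (switch (p, S)) = - signed_weight (p, S)"
proof -
  let ?j = "first_meeting_path p S" and ?k = "partner_path p S" and ?t = "first_meeting p S"
  obtain p' S' where x': "tail_swap ?j ?k ?t (p, S) = (p', S')" by fastforce
  have sw: "switch (p, S) = (p', S')" using x' by simp
  have jk: "?j < n" "?k < n" "?j \<noteq> ?k" using partner_path[OF bad] unfolding meets_first_at_def by auto
  obtain h where meet: "(?t, h) \<in> points p S ?j" "(?t, h) \<in> points p S ?k"
    using partner_path(1)[OF bad] unfolding meets_first_at_def by auto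
  show "switch (p, S) \<in> families"
    unfolding sw x'[symmetric] by (rule tail_swap_in_families[OF x jk meet])
  show "signed_weight (switch (p, S)) = - signed_weight (p, S)"
    unfolding sw x'[symmetric] by (rule signed_weight_tail_swap[OF x jk meet])
  show "intersecting (switch (p, S))" unfolding sw by (rule intersecting_switch[OF x bad x'])
  have "switch (p', S') = tail_swap ?j ?k ?t (p', S')"
    using first_meeting_path_switch[OF x bad x'] first_meeting_switch[OF x bad x']
      partner_path_switch[OF x bad x'] by (simp only: switch.simps)
  also have "\<dots> = (p, S)" unfolding x'[symmetric] by (rule tail_swap_involutive[OF jk(3)])
  finally show "switch (switch (p, S)) = (p, S)" unfolding sw .
  have "p' ?j = p ?k" using x' by (auto simp: Transposition.transpose_def)
  then show "switch (p, S) \<noteq> (p, S)"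
    unfolding sw using permutes_inj[OF families_D(1)[OF x]] jk(3) by (auto dest: injD)
qed

lemma sum_families_cancel_intersecting:
  "(\<Sum>x\<in>families. signed_weight x) = (\<Sum>x\<in>{x\<in>families. \<not> intersecting x}. signed_weight x)"
proof -
  have "(\<Sum>x\<in>{x\<in>families. intersecting x}. signed_weight x) = 0"
  proof (rule sum_involution_eq_0[where h = switch])
    fix x assume x: "x \<in> {x\<in>families. intersecting x}"
    obtain p S where pS: "x = (p, S)" by fastforce
    show "signed_weight (switch x) + signed_weight x = 0" "switch x \<in> {x\<in>families. intersecting x}"
      "switch (switch x) = x" "switch x \<noteq> x"
      using switch[of p S] x unfolding pS by auto
  qed
  moreover have "(\<Sum>x\<in>families. signed_weight x) = (\<Sum>x\<in>{x\<in>families. intersecting x}. signed_weight x)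
      + (\<Sum>x\<in>{x\<in>families. \<not> intersecting x}. signed_weight x)"
    using finite_families by (subst sum.union_disjoint[symmetric]) (auto intro: sum.cong)
  ultimately show ?thesis by simp
qed

end

section \<open>Two paths that cross must meet\<close>

lemma rank_in_eq_0: "P \<subseteq> {a..b} \<Longrightarrow> t \<le> a \<Longrightarrow> rank_in P t = 0"
proof -
  assume "P \<subseteq> {a..b}" "t \<le> a"
  then have e: "{x \<in> P. x < t} = {}" by auto
  show ?thesis unfolding rank_in_def e by simp
qed

lemma rank_in_eq_card: "P \<subseteq> {a..b} \<Longrightarrow> b < t \<Longrightarrow> rank_in P t = card P"
proof -
  assume "P \<subseteq> {a..b}" "b < t"
  then have e: "{x \<in> P. x < t} = P" by auto
  show ?thesis unfolding rank_in_def e by simp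
qed

lemma rank_in_le_dist: "P \<subseteq> {a..b} \<Longrightarrow> int (rank_in P t) \<le> max 0 (t - a)"
proof -
  assume P: "P \<subseteq> {a..b}"
  have "{x \<in> P. x < t} \<subseteq> {a..t-1}" using P by auto
  then have "card {x \<in> P. x < t} \<le> card {a..t-1}" by (intro card_mono) auto
  then show ?thesis unfolding rank_in_def by simp
qed

lemma card_minus_rank_in_le_dist: "P \<subseteq> {a..b} \<Longrightarrow> int (card P) - int (rank_in P t) \<le> max 0 (b + 1 - t)"
proof -
  assume P: "P \<subseteq> {a..b}"
  then have fP: "finite P" using finite_subset by blast
  have "card {x \<in> P. t \<le> x} \<le> card {t..b}" using P by (intro card_mono) auto
  then show ?thesis using card_ge_part[OF fP, of t] rank_in_le_card[OF fP, of t] by simp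
qed

lemma int_discrete_ivt:
  fixes g :: "int \<Rightarrow> int"
  assumes step: "\<And>t. \<bar>g (t + 1) - g t\<bar> \<le> 1" and uv: "u \<le> v" and gu: "g u > 0" and gv: "g v \<le> 0"
  shows "\<exists>t. u \<le> t \<and> t \<le> v \<and> g t = 0"
proof -
  let ?M = "{t \<in> {u..v}. g t \<le> 0}"
  have fin: "finite ?M" by (rule finite_subset[of _ "{u..v}"]) auto
  have ne: "?M \<noteq> {}" using uv gv by auto
  define m where "m = Min ?M"
  have mM: "m \<in> ?M" unfolding m_def using fin ne by (rule Min_in)
  have mmin: "\<And>s. s \<in> ?M \<Longrightarrow> m \<le> s" unfolding m_def using fin by (rule Min_le)
  have "m \<noteq> u" using mM gu by auto
  then have mu: "u \<le> m - 1" using mM by auto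
  have "g (m - 1) > 0"
  proof (rule ccontr)
    assume "\<not> g (m - 1) > 0"
    then have "m - 1 \<in> ?M" using mu mM by auto
    then show False using mmin by fastforce
  qed
  moreover have "\<bar>g (m - 1 + 1) - g (m - 1)\<bar> \<le> 1" by (rule step)
  ultimately have "g m = 0" using mM by auto
  then show ?thesis using mM by auto
qed

context
  fixes P Q :: "int set" and a1 b1 a2 b2 d1 d2 :: int
  assumes P: "P \<subseteq> {a1..b1}" and Q: "Q \<subseteq> {a2..b2}"
begin

private lemma fP: "finite P" using P finite_subset by blast
private lemma fQ: "finite Q" using Q finite_subset by blast

lemma gap_before_start:
  assumes d: "d2 < d1" and a: "a1 - d1 \<le> a2 - d2" and t: "t < a1 \<or> t < a2"
  shows "d2 + int (rank_in Q t) < d1 + int (rank_in P t)"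
proof (cases "t < a2")
  case True
  then have "rank_in Q t = 0" using rank_in_eq_0[OF Q] by simp
  then show ?thesis using d by simp
next
  case False
  then have ta1: "t < a1" using t by simp
  then have "rank_in P t = 0" using rank_in_eq_0[OF P] by simp
  moreover have "int (rank_in Q t) \<le> max 0 (t - a2)" by (rule rank_in_le_dist[OF Q])
  ultimately show ?thesis using d a ta1 False by simp
qed

lemma gap_after_end:
  assumes D: "d2 + int (card Q) < d1 + int (card P)"
    and b: "b1 - (d1 + int (card P)) \<le> b2 - (d2 + int (card Q))"
    and t: "b1 + 1 < t \<or> b2 + 1 < t"
  shows "d2 + int (rank_in Q t) < d1 + int (rank_in P t)"
proof (cases "b1 + 1 < t")
  case True
  then have "rank_in P t = card P" using rank_in_eq_card[OF P] by simp
  moreover have "rank_in Q t \<le> card Q" by (rule rank_in_le_card[OF fQ])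
  ultimately show ?thesis using D by simp
next
  case False
  then have tb2: "b2 + 1 < t" using t by simp
  then have "rank_in Q t = card Q" using rank_in_eq_card[OF Q] by simp
  moreover have "int (card P) - int (rank_in P t) \<le> max 0 (b1 + 1 - t)" by (rule card_minus_rank_in_le_dist[OF P])
  ultimately show ?thesis using D b tb2 False by simp
qed

lemma gap_step: "\<bar>(d1 + int (rank_in P (t + 1)) - (d2 + int (rank_in Q (t + 1)))) - (d1 + int (rank_in P t) - (d2 + int (rank_in Q t)))\<bar> \<le> 1"
  using rank_in_plus_1[OF fP, of t] rank_in_plus_1[OF fQ, of t] by auto

end

lemma paths_meet_if_gap_nonpos:
  assumes P: "P \<subseteq> {a1..b1}" and Q: "Q \<subseteq> {a2..b2}"
    and d: "d2 < d1" and a: "a1 - d1 \<le> a2 - d2"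
    and v: "d1 + int (rank_in P v) \<le> d2 + int (rank_in Q v)"
    and ends: "\<And>t. b1 + 1 < t \<or> b2 + 1 < t \<Longrightarrow> d1 + int (rank_in P t) \<noteq> d2 + int (rank_in Q t)"
  shows "\<exists>t. a1 \<le> t \<and> t \<le> b1 + 1 \<and> a2 \<le> t \<and> t \<le> b2 + 1 \<and> d1 + int (rank_in P t) = d2 + int (rank_in Q t)"
proof -
  define g where "g t = d1 + int (rank_in P t) - (d2 + int (rank_in Q t))" for t
  have step: "\<And>t. \<bar>g (t + 1) - g t\<bar> \<le> 1" unfolding g_def using gap_step[OF P Q] by blast
  have S: "\<And>t. t < a1 \<or> t < a2 \<Longrightarrow> g t > 0" unfolding g_def using gap_before_start[OF P Q d a] by fastforce
  define u where "u = min a1 a2 - 1"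
  have gu: "g u > 0" unfolding u_def by (rule S) linarith
  have gv: "g v \<le> 0" using v unfolding g_def by simp
  have uv: "u \<le> v"
  proof (rule ccontr)
    assume "\<not> u \<le> v"
    then have "v < a1 \<or> v < a2" unfolding u_def by auto
    then show False using S gv by fastforce
  qed
  obtain t where t: "g t = 0" using int_discrete_ivt[OF step uv gu gv] by blast
  have "\<not> (t < a1 \<or> t < a2)" using S t by fastforce
  moreover have "\<not> (b1 + 1 < t \<or> b2 + 1 < t)" using ends t unfolding g_def by fastforce
  ultimately show ?thesis using t unfolding g_def by (intro exI[of _ t]) auto
qed

lemma paths_meet_if_cross:
  assumes P: "P \<subseteq> {a1..b1}" and Q: "Q \<subseteq> {a2..b2}"
    and d: "d2 < d1" and a: "a1 - d1 \<le> a2 - d2"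
    and D: "d1 + int (card P) < d2 + int (card Q)"
    and b: "b2 - (d2 + int (card Q)) \<le> b1 - (d1 + int (card P))"
  shows "\<exists>t. a1 \<le> t \<and> t \<le> b1 + 1 \<and> a2 \<le> t \<and> t \<le> b2 + 1 \<and> d1 + int (rank_in P t) = d2 + int (rank_in Q t)"
proof (rule paths_meet_if_gap_nonpos[OF P Q d a])
  have after: "d1 + int (rank_in P t) < d2 + int (rank_in Q t)" if "b1 + 1 < t \<or> b2 + 1 < t" for t
    using gap_after_end[OF Q P D b, of t] that by blast
  have "b1 + 1 < max b1 b2 + 2" by (simp add: max_def)
  then show "d1 + int (rank_in P (max b1 b2 + 2)) \<le> d2 + int (rank_in Q (max b1 b2 + 2))"
    using after by fastforce
  show "d1 + int (rank_in P t) \<noteq> d2 + int (rank_in Q t)" if "b1 + 1 < t \<or> b2 + 1 < t" for t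
    using after[OF that] by simp
qed

lemma paths_meet_if_touch:
  assumes P: "P \<subseteq> {a1..b1}" and Q: "Q \<subseteq> {a2..b2}"
    and d: "d2 < d1" and a: "a1 - d1 \<le> a2 - d2"
    and D: "d2 + int (card Q) < d1 + int (card P)"
    and b: "b1 - (d1 + int (card P)) \<le> b2 - (d2 + int (card Q))"
    and v: "d1 + int (rank_in P v) \<le> d2 + int (rank_in Q v)"
  shows "\<exists>t. a1 \<le> t \<and> t \<le> b1 + 1 \<and> a2 \<le> t \<and> t \<le> b2 + 1 \<and> d1 + int (rank_in P t) = d2 + int (rank_in Q t)"
proof (rule paths_meet_if_gap_nonpos[OF P Q d a v])
  show "d1 + int (rank_in P t) \<noteq> d2 + int (rank_in Q t)" if "b1 + 1 < t \<or> b2 + 1 < t" for t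
    using gap_after_end[OF P Q D b that] by simp
qed

lemma permutes_strict_mono_eq_id:
  assumes p: "p permutes {0..<n}" and mono: "\<And>j. Suc j < n \<Longrightarrow> p j < p (Suc j)"
  shows "p = id"
proof -
  have le: "x < n \<Longrightarrow> x \<le> p x" for x
    by (induction x) (use mono in \<open>auto simp: Suc_le_eq intro: le_less_trans\<close>)
  have ge: "k < n \<Longrightarrow> p (n - 1 - k) \<le> n - 1 - k" for k
  proof (induction k)
    case 0
    then show ?case using permutes_in_image[OF p, of "n - 1"] by simp
  next
    case (Suc k)
    then have "p (n - 1 - Suc k) < p (n - 1 - k)" using mono[of "n - 1 - Suc k"] Suc_diff_Suc by simp
    then show ?case using Suc by simp
  qed
  show ?thesis
  proof
    fix x show "p x = id x"
      using le[of x] ge[of "n - 1 - x"] permutes_not_in[OF p, of x] by (cases "x < n") auto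
  qed
qed

section \<open>Compatible sources and sinks\<close>

text \<open>Whenever paths \<open>j\<close> and \<open>j + 1\<close> could meet at all, source and sink \<open>j + 1\<close> lie no further
  left on their diagonals than source and sink \<open>j\<close>. Then only the identity permutation carries
  nonintersecting families.\<close>

locale lgv_compatible = lgv +
  assumes st_decreasing: "\<And>j. st (Suc j) < st j"
    and en_decreasing: "\<And>j. en (Suc j) < en j"
    and compatible: "\<And>j. Suc j < n \<Longrightarrow> st j \<le> en (Suc j) \<Longrightarrow>
        A j - st j \<le> A (Suc j) - st (Suc j) \<and> B j - en j \<le> B (Suc j) - en (Suc j)"
begin

lemma st_antimono: "i \<le> j \<Longrightarrow> st j \<le> st i"
proof (induction j rule: dec_induct)
  case (step m) then show ?case using st_decreasing[of m] by simp
qed simp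

lemma en_antimono: "i \<le> j \<Longrightarrow> en j \<le> en i"
proof (induction j rule: dec_induct)
  case (step m) then show ?case using en_decreasing[of m] by simp
qed simp

lemma en_strict_antimono: "i < j \<Longrightarrow> en j < en i"
  using en_antimono[of "Suc i" j] en_decreasing[of i] by simp

text \<open>Paths never descend, so if \<open>en (m + 1) < st m\<close> no path from a source \<open>\<le> m\<close> reaches a
  sink \<open>> m\<close>.\<close>

lemma permutes_respects_cut:
  assumes x: "(p, S) \<in> families" and cut: "en (Suc m) < st m"
  shows "\<And>x. x \<le> m \<Longrightarrow> p x \<le> m" and "\<And>y. m < y \<Longrightarrow> m < p y"
proof -
  have pp: "p permutes {0..<n}" using families_D(1)[OF x] by simp
  show low: "\<And>x. x \<le> m \<Longrightarrow> p x \<le> m"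
  proof -
    fix x assume xm: "x \<le> m"
    show "p x \<le> m"
    proof (cases "x < n")
      case False
      then have "p x = x" using pp by (auto intro: permutes_not_in)
      then show ?thesis using xm by simp
    next
      case True
      have "int (card (S x)) = en (p x) - st x" using families_D(4)[OF x True] by simp
      then have "st x \<le> en (p x)" by linarith
      moreover have "st m \<le> st x" using st_antimono[OF xm] .
      ultimately have "en (Suc m) < en (p x)" using cut by simp
      then show ?thesis using en_antimono[of "Suc m" "p x"] by (cases "Suc m \<le> p x") auto
    qed
  qed
  show "\<And>y. m < y \<Longrightarrow> m < p y"
  proof -
    fix y assume ym: "m < y"
    show "m < p y"
    proof (rule ccontr)
      assume "\<not> m < p y"
      then have pym: "p y \<in> {0..m}" by simp
      have inj: "inj p" using pp by (rule permutes_inj)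
      have "p ` {0..m} = {0..m}"
        by (rule endo_inj_surj) (use low inj in \<open>auto intro: inj_on_subset\<close>)
      then obtain x where "x \<in> {0..m}" "p x = p y" using pym by (metis imageE)
      then have "x = y" using inj by (auto dest: injD)
      then show False using \<open>x \<in> {0..m}\<close> ym by simp
    qed
  qed
qed

lemma intersecting_if_meet:
  assumes "j < n" "k < n" "j \<noteq> k" "A j \<le> t" "t \<le> B (p j) + 1" "A k \<le> t" "t \<le> B (p k) + 1"
    "height j (S j) t = height k (S k) t"
  shows "intersecting (p, S)"
proof -
  have "(t, height j (S j) t) \<in> points p S j \<inter> points p S k" using assms by (auto simp: path_points_iff)
  then show ?thesis unfolding intersecting.simps meets_another_def using assms(1-3) by blast
qed

lemma sink_offsets_mono:
  assumes "i \<le> i'" "i' < n" "\<And>m. i \<le> m \<Longrightarrow> m < i' \<Longrightarrow> st m \<le> en (Suc m)"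
  shows "B i - en i \<le> B i' - en i'"
  using assms
proof (induction i' rule: dec_induct)
  case base then show ?case by simp
next
  case (step m)
  have "B m - en m \<le> B (Suc m) - en (Suc m)" using compatible[of m] step.prems step.hyps by auto
  then show ?case using step by auto
qed

lemma compatible_between_swapped_sinks:
  assumes x: "(p, S) \<in> families" and m: "p (Suc j) \<le> m" "m < p j"
  shows "st m \<le> en (Suc m)"
proof (rule ccontr)
  assume "\<not> st m \<le> en (Suc m)"
  then have cut: "en (Suc m) < st m" by simp
  have "\<not> m < Suc j" using permutes_respects_cut(2)[OF x cut, of "Suc j"] m(1) by linarith
  then have "p j \<le> m" using permutes_respects_cut(1)[OF x cut, of j] by simp
  then show False using m(2) by simp
qed

lemma nonintersecting_perm_mono:
  assumes x: "(p, S) \<in> families" and good: "\<not> intersecting (p, S)" and j: "Suc j < n"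
  shows "p j < p (Suc j)"
proof (cases "en (Suc j) < st j")
  case True
  then show ?thesis
    using permutes_respects_cut[OF x True, of j] permutes_respects_cut[OF x True, of "Suc j"] by fastforce
next
  case False
  have pp: "p permutes {0..<n}" using families_D(1)[OF x] .
  show ?thesis
  proof (rule ccontr)
    assume "\<not> p j < p (Suc j)"
    moreover have "p j \<noteq> p (Suc j)" using permutes_inj[OF pp] by (auto dest: injD)
    ultimately have swapped: "p (Suc j) < p j" by simp
    have jn: "j < n" and pjn: "p j < n" using j permutes_in_image[OF pp, of j] by auto
    have "B (p (Suc j)) - en (p (Suc j)) \<le> B (p j) - en (p j)"
      using sink_offsets_mono[OF _ pjn compatible_between_swapped_sinks[OF x]] swapped by simp
    then obtain t where t: "A j \<le> t" "t \<le> B (p j) + 1" "A (Suc j) \<le> t" "t \<le> B (p (Suc j)) + 1"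
        "st j + int (rank_in (S j) t) = st (Suc j) + int (rank_in (S (Suc j)) t)"
      using paths_meet_if_cross[OF families_D(3)[OF x jn] families_D(3)[OF x j] st_decreasing[of j]]
        compatible[OF j] False families_D(4)[OF x jn] families_D(4)[OF x j] en_strict_antimono[OF swapped]
      by auto
    have "intersecting (p, S)"
      by (rule intersecting_if_meet[of j "Suc j" t p]) (use t jn j in \<open>auto simp: height_def\<close>)
    then show False using good by simp
  qed
qed

lemma nonintersecting_perm_eq_id: "(p, S) \<in> families \<Longrightarrow> \<not> intersecting (p, S) \<Longrightarrow> p = id"
  using permutes_strict_mono_eq_id[of p] nonintersecting_perm_mono[of p S] families_D(1)[of p S] by simp

lemma nonintersecting_heights_decrease:
  assumes x: "(id, S) \<in> families" and g: "\<not> intersecting (id, S)" and j: "Suc j < n"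
  shows "height (Suc j) (S (Suc j)) t < height j (S j) t"
proof -
  have jn: "j < n" using j by simp
  have Pj: "S j \<subseteq> {A j..B j}" "int (card (S j)) = en j - st j"
    using families_D(3,4)[OF x jn] by auto
  have Qj: "S (Suc j) \<subseteq> {A (Suc j)..B (Suc j)}" "int (card (S (Suc j))) = en (Suc j) - st (Suc j)"
    using families_D(3,4)[OF x j] by auto
  show ?thesis
  proof (cases "en (Suc j) < st j")
    case True
    have "rank_in (S (Suc j)) t \<le> card (S (Suc j))" by (rule rank_in_le_card) (use Qj finite_subset in blast)
    then have "height (Suc j) (S (Suc j)) t \<le> en (Suc j)" unfolding height_def using Qj(2) by simp
    moreover have "st j \<le> height j (S j) t" unfolding height_def by simp
    ultimately show ?thesis using True by simp
  next
    case False
    then have conn: "st j \<le> en (Suc j)" by simp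
    have fl: "A j - st j \<le> A (Suc j) - st (Suc j)" "B j - en j \<le> B (Suc j) - en (Suc j)"
      using compatible[OF j conn] by auto
    show ?thesis
    proof (rule ccontr)
      assume "\<not> ?thesis"
      then have t0: "st j + int (rank_in (S j) t) \<le> st (Suc j) + int (rank_in (S (Suc j)) t)"
        unfolding height_def by simp
      obtain t' where t: "A j \<le> t'" "t' \<le> B j + 1" "A (Suc j) \<le> t'" "t' \<le> B (Suc j) + 1"
          "st j + int (rank_in (S j) t') = st (Suc j) + int (rank_in (S (Suc j)) t')"
        using paths_meet_if_touch[OF Pj(1) Qj(1) st_decreasing[of j] fl(1) _ _ t0] Pj(2) Qj(2) en_decreasing[of j] fl(2)
        by auto
      have "intersecting (id, S)"
        by (rule intersecting_if_meet[of j "Suc j" t']) (use t jn j in \<open>auto simp: height_def\<close>)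
      then show False using g by simp
    qed
  qed
qed

lemma not_intersecting_if_heights_decrease:
  assumes adj: "\<And>j t. Suc j < n \<Longrightarrow> height (Suc j) (S (Suc j)) t < height j (S j) t"
  shows "\<not> intersecting (id, S)"
proof -
  have lt: "\<And>j k t. j < k \<Longrightarrow> k < n \<Longrightarrow> height k (S k) t < height j (S j) t"
  proof -
    fix j k t
    show "j < k \<Longrightarrow> k < n \<Longrightarrow> height k (S k) t < height j (S j) t"
    proof (induction k)
      case 0 then show ?case by simp
    next
      case (Suc k)
      have a: "height (Suc k) (S (Suc k)) t < height k (S k) t" using adj Suc.prems by simp
      show ?case
      proof (cases "j = k")
        case True then show ?thesis using a by simp
      next
        case False
        then have "height k (S k) t < height j (S j) t" using Suc by simp
        then show ?thesis using a by simp
      qed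
    qed
  qed
  show ?thesis
  proof
    assume "intersecting (id, S)"
    then obtain j k w where jk: "j < n" "k < n" "j \<noteq> k" and w: "w \<in> points id S j" "w \<in> points id S k"
      unfolding intersecting.simps meets_another_def by auto
    obtain u v where "w = (u, v)" by (cases w)
    then have "height j (S j) u = height k (S k) u" using w by (auto simp: path_points_iff)
    moreover have "j < k \<or> k < j" using jk by auto
    ultimately show False using lt[of j k u] lt[of k j u] jk by auto
  qed
qed

definition nonintersecting :: "(nat \<Rightarrow> int set) set" where
  "nonintersecting = {S \<in> PiE {0..<n} (\<lambda>j. paths j j).
     \<forall>j t. Suc j < n \<longrightarrow> height (Suc j) (S (Suc j)) t < height j (S j) t}"

theorem sum_families_eq_sum_nonintersecting:
  "(\<Sum>x\<in>families. signed_weight x) = (\<Sum>S\<in>nonintersecting. \<Prod>j<n. path_weight j (S j))"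
proof -
  have eq: "{x\<in>families. \<not> intersecting x} = (\<lambda>S. (id :: nat \<Rightarrow> nat, S)) ` nonintersecting"
  proof (intro equalityI subsetI)
    fix x assume "x \<in> {x\<in>families. \<not> intersecting x}"
    then have x: "x \<in> families" "\<not> intersecting x" by auto
    obtain p S where xps: "x = (p, S)" by (cases x)
    have "p = id" using nonintersecting_perm_eq_id x xps by simp
    then have xid: "x = (id, S)" using xps by simp
    have "S \<in> nonintersecting"
      using x nonintersecting_heights_decrease[of S] unfolding xid nonintersecting_def families_def by auto
    then show "x \<in> (\<lambda>S. (id :: nat \<Rightarrow> nat, S)) ` nonintersecting" using xid by auto
  next
    fix x :: "(nat \<Rightarrow> nat) \<times> (nat \<Rightarrow> int set)"
    assume "x \<in> (\<lambda>S. (id :: nat \<Rightarrow> nat, S)) ` nonintersecting"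
    then obtain S where S: "S \<in> nonintersecting" "x = (id :: nat \<Rightarrow> nat, S)" by auto
    have "x \<in> families" unfolding families_def S(2) using S(1) unfolding nonintersecting_def
      by (auto simp: permutes_id)
    moreover have "\<not> intersecting x"
      unfolding S(2) by (rule not_intersecting_if_heights_decrease) (use S(1) nonintersecting_def in auto)
    ultimately show "x \<in> {x\<in>families. \<not> intersecting x}" by simp
  qed
  have "(\<Sum>x\<in>families. signed_weight x) = (\<Sum>x\<in>(\<lambda>S. (id :: nat \<Rightarrow> nat, S)) ` nonintersecting. signed_weight x)"
    using sum_families_cancel_intersecting eq by simp
  also have "\<dots> = (\<Sum>S\<in>nonintersecting. signed_weight (id, S))"
    using sum.reindex[of "Pair (id::nat\<Rightarrow>nat)" nonintersecting signed_weight] by (simp add: inj_on_def o_def)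
  also have "\<dots> = (\<Sum>S\<in>nonintersecting. \<Prod>j<n. path_weight j (S j))" unfolding signed_weight.simps by (simp add: sign_id)
  finally show ?thesis .
qed

end

lemma conj_part_antimono: "j \<le> j' \<Longrightarrow> conj_part lam j' \<le> conj_part lam j"
  unfolding conj_part_def by (rule card_mono) auto

lemma conj_part_mono:
  assumes "part_subseteq mu lam" "1 \<le> j"
  shows "conj_part mu j \<le> conj_part lam j"
proof -
  have "{i \<in> {1..length mu}. j \<le> part_at mu i} \<subseteq> {i \<in> {1..length lam}. j \<le> part_at lam i}"
  proof
    fix i assume "i \<in> {i \<in> {1..length mu}. j \<le> part_at mu i}"
    then have i: "1 \<le> i" "j \<le> part_at lam i"
      using assms(1) unfolding part_subseteq_def by (auto intro: le_trans)
    then have "i \<le> length lam" using assms(2) unfolding part_at_def by (auto split: if_splits)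
    then show "i \<in> {i \<in> {1..length lam}. j \<le> part_at lam i}" using i by auto
  qed
  then show ?thesis unfolding conj_part_def by (intro card_mono) auto
qed

lemma part_at_antimono:
  assumes "is_partition lam" "1 \<le> i'" "i' \<le> i"
  shows "part_at lam i \<le> part_at lam i'"
proof (cases "i \<le> length lam \<and> i' \<noteq> i")
  case True
  then have "lam ! (i - 1) \<le> lam ! (i' - 1)"
    using assms unfolding is_partition_def by (auto simp: sorted_wrt_iff_nth_less)
  then show ?thesis unfolding part_at_def using True assms by auto
qed (auto simp: part_at_def)

lemma downward_closed_eq_atLeastAtMost:
  fixes X :: "nat set"
  assumes X: "X \<subseteq> {1..N}" and closed: "\<And>i i'. i \<in> X \<Longrightarrow> 1 \<le> i' \<Longrightarrow> i' \<le> i \<Longrightarrow> i' \<in> X"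
  shows "X = {1..card X}"
proof (cases "X = {}")
  case False
  have fin: "finite X" using X finite_subset by blast
  have "X = {1..Max X}"
    using X fin closed Max_in[OF fin False] by (auto intro: Max_ge)
  then show ?thesis by (metis card_atLeastAtMost diff_Suc_1)
qed simp

lemma conj_part_iff:
  assumes p: "is_partition lam" and i: "1 \<le> i" and j: "1 \<le> j"
  shows "j \<le> part_at lam i \<longleftrightarrow> i \<le> conj_part lam j"
proof -
  let ?X = "{i \<in> {1..length lam}. j \<le> part_at lam i}"
  have X: "?X = {1..card ?X}"
    by (rule downward_closed_eq_atLeastAtMost[of _ "length lam"])
      (use part_at_antimono[OF p] in \<open>auto intro: le_trans\<close>)
  have "j \<le> part_at lam i \<Longrightarrow> i \<le> length lam"
    using j unfolding part_at_def by (auto split: if_splits)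
  then have "j \<le> part_at lam i \<longleftrightarrow> i \<in> ?X" using i by auto
  also have "\<dots> \<longleftrightarrow> i \<le> conj_part lam j" using i by (subst X) (simp add: conj_part_def)
  finally show ?thesis .
qed

lemma mem_skew_iff:
  assumes "is_partition lam" "is_partition mu"
  shows "(r, c) \<in> skew lam mu \<longleftrightarrow> 1 \<le> c \<and> conj_part mu c < r \<and> r \<le> conj_part lam c"
  using conj_part_iff[OF assms(1), of r c] conj_part_iff[OF assms(2), of r c]
  unfolding skew_def diagram_def by (cases "1 \<le> r") auto

lemma finite_skew: "finite (skew lam mu)"
proof -
  have "skew lam mu \<subseteq> {1..length lam} \<times> {1..Max (insert 0 (set lam))}"
  proof
    fix c assume "c \<in> skew lam mu"
    then obtain i j where c: "c = (i, j)" "1 \<le> i" "1 \<le> j" "j \<le> part_at lam i"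
      unfolding skew_def diagram_def by auto
    then have "i \<le> length lam" "part_at lam i = lam ! (i - 1)"
      unfolding part_at_def by (auto split: if_splits)
    then have "part_at lam i \<le> Max (insert 0 (set lam))" using c(2) by simp
    then show "c \<in> {1..length lam} \<times> {1..Max (insert 0 (set lam))}"
      using c \<open>i \<le> length lam\<close> by auto
  qed
  then show ?thesis by (rule finite_subset) simp
qed

section \<open>Summing over super tableaux\<close>

text \<open>\<^const>\<open>flagged_SSYT\<close> says nothing outside the shape; fixing the entries there to \<open>0\<close>
  makes a tableau determined by its entries on the shape.\<close>

definition tableaux :: "nat list \<Rightarrow> nat list \<Rightarrow> (nat \<Rightarrow> int) \<Rightarrow> (nat \<Rightarrow> int) \<Rightarrow> (nat \<times> nat \<Rightarrow> int) set" where
  "tableaux lam mu a b = {T. flagged_SSYT lam mu a b T \<and> (\<forall>c. c \<notin> skew lam mu \<longrightarrow> T c = 0)}"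

lemma ST_eq_image:
  "ST lam mu r a b = (\<lambda>(T, P). super_of lam mu r T P) ` (tableaux lam mu a b \<times> Pow (skew lam mu))"
proof (intro equalityI subsetI)
  fix X assume "X \<in> ST lam mu r a b"
  then obtain T P where X: "X = super_of lam mu r T P" "flagged_SSYT lam mu a b T" "P \<subseteq> skew lam mu"
    unfolding ST_def by auto
  define T0 where "T0 = (\<lambda>c. if c \<in> skew lam mu then T c else 0)"
  have "T0 \<in> tableaux lam mu a b" using X(2) unfolding T0_def tableaux_def flagged_SSYT_def by simp
  moreover have "X = super_of lam mu r T0 P" unfolding X(1) super_of_def T0_def by (rule ext) simp
  ultimately show "X \<in> (\<lambda>(T, P). super_of lam mu r T P) ` (tableaux lam mu a b \<times> Pow (skew lam mu))"
    using X(3) by auto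
qed (auto simp: ST_def tableaux_def)

lemma inj_on_super_of: "inj_on (\<lambda>(T, P). super_of lam mu r T P) (tableaux lam mu a b \<times> Pow (skew lam mu))"
proof (rule inj_onI, clarify)
  fix T P T' P'
  assume T: "T \<in> tableaux lam mu a b" "P \<subseteq> skew lam mu" and T': "T' \<in> tableaux lam mu a b" "P' \<subseteq> skew lam mu"
    and eq: "super_of lam mu r T P = super_of lam mu r T' P'"
  have on_skew: "(c \<in> P \<longleftrightarrow> c \<in> P') \<and> T c = T' c" if "c \<in> skew lam mu" for c
  proof -
    have "super_of lam mu r T P c = super_of lam mu r T' P' c" using eq by simp
    then show ?thesis using that unfolding super_of_def by (auto split: if_splits)
  qed
  have "T c = T' c" for c
  proof (cases "c \<in> skew lam mu")
    case False
    have "T c = 0" "T' c = 0" using False T(1) T'(1) unfolding tableaux_def by blast+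
    then show ?thesis by simp
  qed (use on_skew in blast)
  then show "T = T' \<and> P = P'" using on_skew T(2) T'(2) by blast
qed

lemma sum_Pow_prod_if:
  assumes "finite A"
  shows "(\<Sum>P\<in>Pow A. \<Prod>c\<in>A. if c \<in> P then g c else f c) = (\<Prod>c\<in>A. g c + (f c :: 'a::comm_ring_1))"
proof -
  have "(\<Prod>c\<in>A. if c \<in> P then g c else f c) = prod g P * prod f (A - P)" if "P \<subseteq> A" for P
    using prod.If_cases[OF assms, of "\<lambda>c. c \<in> P" g f] that by (simp add: Int_absorb1 Diff_eq)
  then show ?thesis using prod_add[OF assms, of g f] by simp
qed

lemma sum_ST_wt:
  "(\<Sum>X\<in>ST lam mu r a b. wt lam mu y z X) =
   (\<Sum>T\<in>tableaux lam mu a b. \<Prod>c\<in>skew lam mu. y (T c) - z (T c + content lam r c))"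
proof -
  have "(\<Sum>X\<in>ST lam mu r a b. wt lam mu y z X) =
      (\<Sum>T\<in>tableaux lam mu a b. \<Sum>P\<in>Pow (skew lam mu). wt lam mu y z (super_of lam mu r T P))"
    unfolding ST_eq_image sum.reindex[OF inj_on_super_of]
    by (simp add: sum.cartesian_product split_def)
  also have "\<dots> = (\<Sum>T\<in>tableaux lam mu a b. \<Sum>P\<in>Pow (skew lam mu).
      \<Prod>c\<in>skew lam mu. if c \<in> P then - z (T c + content lam r c) else y (T c))"
    unfolding wt_def super_of_def wt_entry_def by (intro sum.cong prod.cong refl) auto
  also have "\<dots> = (\<Sum>T\<in>tableaux lam mu a b. \<Prod>c\<in>skew lam mu. y (T c) - z (T c + content lam r c))"
    by (simp add: sum_Pow_prod_if[OF finite_skew])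
  finally show ?thesis .
qed

section \<open>Tableaux as nonintersecting families of paths\<close>

text \<open>Column \<open>j + 1\<close> of \<open>\<lambda>/\<mu>\<close> (note the shift: LGV paths are indexed from \<open>0\<close>) becomes a path
  from height \<open>column_offset mu j\<close> to height \<open>column_offset lam j\<close> whose rising steps are at its
  entries.\<close>

definition column_offset :: "nat list \<Rightarrow> nat \<Rightarrow> int" where
  "column_offset lam j = int (conj_part lam (Suc j)) - int j"

definition column_rows :: "nat list \<Rightarrow> nat list \<Rightarrow> nat \<Rightarrow> nat set" where
  "column_rows lam mu j = {Suc (conj_part mu (Suc j))..conj_part lam (Suc j)}"

definition columns_of :: "nat list \<Rightarrow> nat list \<Rightarrow> nat \<Rightarrow> (nat \<times> nat \<Rightarrow> int) \<Rightarrow> nat \<Rightarrow> int set" where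
  "columns_of lam mu n T = restrict (\<lambda>j. (\<lambda>r. T (r, Suc j)) ` column_rows lam mu j) {0..<n}"

definition tableau_of :: "nat list \<Rightarrow> nat list \<Rightarrow> (nat \<Rightarrow> int set) \<Rightarrow> nat \<times> nat \<Rightarrow> int" where
  "tableau_of lam mu S = (\<lambda>(r, c). if (r, c) \<in> skew lam mu
     then sorted_list_of_set (S (c - 1)) ! (r - Suc (conj_part mu c)) else 0)"

definition column_families :: "nat list \<Rightarrow> nat list \<Rightarrow> nat \<Rightarrow> (nat \<Rightarrow> int) \<Rightarrow> (nat \<Rightarrow> int) \<Rightarrow> (nat \<Rightarrow> int set) set" where
  "column_families lam mu n a b = {S \<in> PiE {0..<n} (\<lambda>j. {X. X \<subseteq> {a (Suc j)..b (Suc j)} \<and>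
        int (card X) = column_offset lam j - column_offset mu j}).
     \<forall>j t. Suc j < n \<longrightarrow>
       column_offset mu (Suc j) + int (rank_in (S (Suc j)) t) < column_offset mu j + int (rank_in (S j) t)}"

context
  fixes lam mu :: "nat list" and n :: nat and a b :: "nat \<Rightarrow> int"
  assumes plam: "is_partition lam" and pmu: "is_partition mu" and psub: "part_subseteq mu lam"
    and cf: "column_flags lam mu n a b"
begin

lemma mem_skew_iff_column_rows: "(r, c) \<in> skew lam mu \<longleftrightarrow> (\<exists>j<n. c = Suc j \<and> r \<in> column_rows lam mu j)"
proof
  assume rc: "(r, c) \<in> skew lam mu"
  then have c: "1 \<le> c" "conj_part mu c < r" "r \<le> conj_part lam c" using mem_skew_iff[OF plam pmu] by auto
  then have "c \<le> part_at lam 1" using conj_part_iff[OF plam, of 1 c] by simp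
  then have "c \<le> n" using cf unfolding column_flags_def by simp
  then show "\<exists>j<n. c = Suc j \<and> r \<in> column_rows lam mu j"
    using c unfolding column_rows_def by (intro exI[of _ "c - 1"]) auto
qed (auto simp: mem_skew_iff[OF plam pmu] column_rows_def)

lemma tableau_column_strict:
  assumes T: "T \<in> tableaux lam mu a b" and j: "j < n"
    and r: "r \<in> column_rows lam mu j" "r' \<in> column_rows lam mu j" "r < r'"
  shows "T (r, Suc j) < T (r', Suc j)"
proof -
  have "Suc r \<le> r'" using r(3) by simp
  then show ?thesis using r(2)
  proof (induction r' rule: dec_induct)
    case base
    then show ?case using T r(1) j unfolding tableaux_def flagged_SSYT_def mem_skew_iff_column_rows by auto
  next
    case (step m)
    then have "m \<in> column_rows lam mu j" using r(1) unfolding column_rows_def by auto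
    moreover have "T (m, Suc j) < T (Suc m, Suc j)"
      using T step(4) calculation j unfolding tableaux_def flagged_SSYT_def mem_skew_iff_column_rows by auto
    ultimately show ?case using step(3) by fastforce
  qed
qed

lemma tableau_column:
  assumes T: "T \<in> tableaux lam mu a b" and j: "j < n"
  defines "f \<equiv> \<lambda>r. T (r, Suc j)" and "R \<equiv> column_rows lam mu j"
  shows "inj_on f R" "card (f ` R) = conj_part lam (Suc j) - conj_part mu (Suc j)"
    and "r \<in> R \<Longrightarrow> rank_in (f ` R) (f r) = r - Suc (conj_part mu (Suc j))"
    and "f ` R \<subseteq> {a (Suc j)..b (Suc j)}"
proof -
  note col = rank_in_strict_mono_column[of "conj_part mu (Suc j)" "conj_part lam (Suc j)" f]
  have "f r < f r'" if "Suc (conj_part mu (Suc j)) \<le> r" "r < r'" "r' \<le> conj_part lam (Suc j)" for r r'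
    unfolding f_def using tableau_column_strict[OF T j, of r r'] that unfolding column_rows_def by simp
  then show "inj_on f R" "card (f ` R) = conj_part lam (Suc j) - conj_part mu (Suc j)"
    and "r \<in> R \<Longrightarrow> rank_in (f ` R) (f r) = r - Suc (conj_part mu (Suc j))"
    using col unfolding R_def column_rows_def by auto
  show "f ` R \<subseteq> {a (Suc j)..b (Suc j)}"
    using T j unfolding f_def R_def tableaux_def flagged_SSYT_def mem_skew_iff_column_rows by auto
qed

text \<open>Rows are weakly increasing, so the \<open>\<rho>\<close>-th entry of column \<open>j + 1\<close> is at most that of
  column \<open>j + 2\<close>: fewer entries of the right column than of the left column lie below \<open>t\<close>,
  after shifting by the tops \<open>\<mu>'\<close> of the two columns.\<close>

lemma tableau_columns_interlace:
  assumes T: "T \<in> tableaux lam mu a b" and j1: "Suc j < n"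
  shows "conj_part mu (Suc (Suc j)) + card {r \<in> column_rows lam mu (Suc j). T (r, Suc (Suc j)) < t}
    \<le> conj_part mu (Suc j) + card {r \<in> column_rows lam mu j. T (r, Suc j) < t}"
    (is "?M2 + card ?Rt' \<le> ?M1 + card ?Rt")
proof (cases "?Rt' = {}")
  case True
  show ?thesis unfolding True using conj_part_antimono[of "Suc j" "Suc (Suc j)" mu] by simp
next
  case False
  have j: "j < n" using j1 by simp
  have fin: "finite ?Rt'" "finite ?Rt" unfolding column_rows_def by simp_all
  define \<rho> where "\<rho> = Max ?Rt'"
  have \<rho>: "\<rho> \<in> ?Rt'" unfolding \<rho>_def using fin(1) False by (rule Max_in)
  have "?Rt' \<subseteq> {Suc ?M2..\<rho>}" using Max_ge[OF fin(1)] unfolding \<rho>_def column_rows_def by auto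
  then have Rt': "card ?Rt' \<le> \<rho> - ?M2" "Suc ?M2 \<le> \<rho>" using card_mono[of "{Suc ?M2..\<rho>}"] \<rho> by auto
  show ?thesis
  proof (cases "\<rho> \<le> ?M1")
    case False
    have "\<rho> \<le> conj_part lam (Suc (Suc j))" using \<rho> unfolding column_rows_def by simp
    then have \<rho>R: "\<rho> \<in> column_rows lam mu j"
      using False conj_part_antimono[of "Suc j" "Suc (Suc j)" lam] unfolding column_rows_def by simp
    have "T (\<rho>, Suc j) \<le> T (\<rho>, Suc (Suc j))"
      using T \<rho>R \<rho> j j1 unfolding tableaux_def flagged_SSYT_def mem_skew_iff_column_rows by auto
    then have "T (\<rho>, Suc j) < t" using \<rho> by simp
    have "{Suc ?M1..\<rho>} \<subseteq> ?Rt"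
    proof
      fix q assume q: "q \<in> {Suc ?M1..\<rho>}"
      then have qR: "q \<in> column_rows lam mu j" using \<rho>R unfolding column_rows_def by auto
      have "T (q, Suc j) \<le> T (\<rho>, Suc j)"
        using tableau_column_strict[OF T j qR \<rho>R] q by (cases "q = \<rho>") auto
      then show "q \<in> ?Rt" using qR \<open>T (\<rho>, Suc j) < t\<close> by simp
    qed
    then have "card {Suc ?M1..\<rho>} \<le> card ?Rt" by (rule card_mono[OF fin(2)])
    then have "\<rho> - ?M1 \<le> card ?Rt" by simp
    then show ?thesis using Rt' False by simp
  qed (use Rt' in simp)
qed

lemma columns_of_in_column_families:
  assumes T: "T \<in> tableaux lam mu a b"
  shows "columns_of lam mu n T \<in> column_families lam mu n a b"
proof -
  have col: "columns_of lam mu n T j = (\<lambda>r. T (r, Suc j)) ` column_rows lam mu j" if "j < n" for j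
    unfolding columns_of_def using that by simp
  have rank: "rank_in (columns_of lam mu n T j) t = card {r \<in> column_rows lam mu j. T (r, Suc j) < t}"
    if "j < n" for j t
  proof -
    have "{x \<in> columns_of lam mu n T j. x < t} = (\<lambda>r. T (r, Suc j)) ` {r \<in> column_rows lam mu j. T (r, Suc j) < t}"
      unfolding col[OF that] by auto
    then show ?thesis
      unfolding rank_in_def using inj_on_subset[OF tableau_column(1)[OF T that]] by (simp add: card_image)
  qed
  have "columns_of lam mu n T \<in> PiE {0..<n} (\<lambda>j. {X. X \<subseteq> {a (Suc j)..b (Suc j)} \<and>
      int (card X) = column_offset lam j - column_offset mu j})"
    unfolding columns_of_def restrict_PiE_iff column_offset_def
    using tableau_column(2,4)[OF T] conj_part_mono[OF psub] by (auto simp: of_nat_diff)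
  moreover have "column_offset mu (Suc j) + int (rank_in (columns_of lam mu n T (Suc j)) t)
      < column_offset mu j + int (rank_in (columns_of lam mu n T j) t)" if j1: "Suc j < n" for j t
    using tableau_columns_interlace[OF T j1, of t] rank[OF j1, of t] rank[of j t] j1
    unfolding column_offset_def by simp
  ultimately show ?thesis unfolding column_families_def by blast
qed

lemma column_families_D:
  assumes S: "S \<in> column_families lam mu n a b" and j: "j < n"
  shows "S j \<subseteq> {a (Suc j)..b (Suc j)}" "card (S j) = conj_part lam (Suc j) - conj_part mu (Suc j)"
    and "finite (S j)"
proof -
  have sub: "S j \<subseteq> {a (Suc j)..b (Suc j)}"
    and card: "int (card (S j)) = int (conj_part lam (Suc j)) - int (conj_part mu (Suc j))"
    using S j unfolding column_families_def column_offset_def by (auto simp: PiE_iff)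
  then show "S j \<subseteq> {a (Suc j)..b (Suc j)}" "finite (S j)" using finite_subset by auto
  from card show "card (S j) = conj_part lam (Suc j) - conj_part mu (Suc j)" by arith
qed

lemma tableau_of_entry:
  assumes S: "S \<in> column_families lam mu n a b" and j: "j < n" and r: "r \<in> column_rows lam mu j"
  defines "k \<equiv> r - Suc (conj_part mu (Suc j))"
  shows "tableau_of lam mu S (r, Suc j) = sorted_list_of_set (S j) ! k"
    and "k < card (S j)" "sorted_list_of_set (S j) ! k \<in> S j"
    and "rank_in (S j) (sorted_list_of_set (S j) ! k) = k"
proof -
  show k: "k < card (S j)" using column_families_D(2)[OF S j] r unfolding k_def column_rows_def by auto
  show "tableau_of lam mu S (r, Suc j) = sorted_list_of_set (S j) ! k"
    using j r unfolding tableau_of_def k_def mem_skew_iff_column_rows by auto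
  show "sorted_list_of_set (S j) ! k \<in> S j" "rank_in (S j) (sorted_list_of_set (S j) ! k) = k"
    using nth_sorted_list_of_set_mem rank_in_nth_sorted_list_of_set column_families_D(3)[OF S j] k by auto
qed

lemma tableau_of_rows_weakly_increasing:
  assumes S: "S \<in> column_families lam mu n a b" and j1: "Suc j < n"
    and r: "r \<in> column_rows lam mu j" "r \<in> column_rows lam mu (Suc j)"
  shows "tableau_of lam mu S (r, Suc j) \<le> tableau_of lam mu S (r, Suc (Suc j))"
proof -
  have j: "j < n" using j1 by simp
  define e e' where "e = tableau_of lam mu S (r, Suc j)" and "e' = tableau_of lam mu S (r, Suc (Suc j))"
  note E = tableau_of_entry[OF S j r(1), folded e_def] and E' = tableau_of_entry[OF S j1 r(2), folded e'_def]
  have "column_offset mu (Suc j) + int (rank_in (S (Suc j)) (e' + 1)) < column_offset mu j + int (rank_in (S j) (e' + 1))"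
    using S j1 unfolding column_families_def by blast
  moreover have "rank_in (S (Suc j)) (e' + 1) = r - Suc (conj_part mu (Suc (Suc j))) + 1"
    using rank_in_plus_1[OF column_families_D(3)[OF S j1], of e'] E'(1,3,4) by simp
  ultimately have "r - conj_part mu (Suc j) \<le> rank_in (S j) (e' + 1)"
    using r(2) unfolding column_offset_def column_rows_def by simp
  then have "\<not> e' + 1 \<le> e"
    using rank_in_mono[OF column_families_D(3)[OF S j], of "e' + 1" e] E(1,3,4) r(1)
    unfolding column_rows_def by auto
  then show ?thesis unfolding e_def e'_def by simp
qed

lemma tableau_of_in_tableaux:
  assumes S: "S \<in> column_families lam mu n a b"
  shows "tableau_of lam mu S \<in> tableaux lam mu a b"
proof -
  have flag: "a c \<le> tableau_of lam mu S (i, c) \<and> tableau_of lam mu S (i, c) \<le> b c"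
    if "(i, c) \<in> skew lam mu" for i c
    using that tableau_of_entry[OF S] column_families_D(1)[OF S] unfolding mem_skew_iff_column_rows by fastforce
  have col: "tableau_of lam mu S (i, c) < tableau_of lam mu S (i + 1, c)"
    if ic: "(i, c) \<in> skew lam mu" "(i + 1, c) \<in> skew lam mu" for i c
  proof -
    obtain j where j: "j < n" "c = Suc j" "i \<in> column_rows lam mu j" "i + 1 \<in> column_rows lam mu j"
      using ic unfolding mem_skew_iff_column_rows by auto
    moreover have "i - Suc (conj_part mu (Suc j)) < i + 1 - Suc (conj_part mu (Suc j))"
      using j(3) unfolding column_rows_def by auto
    ultimately show ?thesis
      using tableau_of_entry(1,2)[OF S j(1) j(3)] tableau_of_entry(1,2)[OF S j(1) j(4)]
        nth_sorted_list_of_set_less_iff[OF column_families_D(3)[OF S j(1)]] by simp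
  qed
  have row: "tableau_of lam mu S (i, c) \<le> tableau_of lam mu S (i, c + 1)"
    if "(i, c) \<in> skew lam mu" "(i, c + 1) \<in> skew lam mu" for i c
    using that tableau_of_rows_weakly_increasing[OF S] unfolding mem_skew_iff_column_rows by auto
  show ?thesis using flag col row unfolding tableaux_def flagged_SSYT_def tableau_of_def by auto
qed

lemma tableau_of_columns_of:
  assumes T: "T \<in> tableaux lam mu a b"
  shows "tableau_of lam mu (columns_of lam mu n T) = T"
proof
  fix c :: "nat \<times> nat"
  obtain i k where c: "c = (i, k)" by fastforce
  show "tableau_of lam mu (columns_of lam mu n T) c = T c"
  proof (cases "(i, k) \<in> skew lam mu")
    case True
    then obtain j where j: "j < n" "k = Suc j" "i \<in> column_rows lam mu j"
      unfolding mem_skew_iff_column_rows by auto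
    have col: "columns_of lam mu n T j = (\<lambda>r. T (r, Suc j)) ` column_rows lam mu j"
      unfolding columns_of_def using j by simp
    have fin: "finite (columns_of lam mu n T j)" unfolding col column_rows_def by simp
    have mem: "T (i, Suc j) \<in> columns_of lam mu n T j" unfolding col using j(3) by simp
    have rank: "rank_in (columns_of lam mu n T j) (T (i, Suc j)) = i - Suc (conj_part mu (Suc j))"
      unfolding col using tableau_column(3)[OF T j(1) j(3)] by simp
    have "tableau_of lam mu (columns_of lam mu n T) c =
        sorted_list_of_set (columns_of lam mu n T j) ! (i - Suc (conj_part mu (Suc j)))"
      using True j unfolding c tableau_of_def by simp
    then show ?thesis using nth_sorted_list_of_set_rank_in(2)[OF fin mem] rank c j(2) by simp
  qed (use T in \<open>auto simp: c tableau_of_def tableaux_def\<close>)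
qed

lemma columns_of_tableau_of:
  assumes S: "S \<in> column_families lam mu n a b"
  shows "columns_of lam mu n (tableau_of lam mu S) = S"
proof
  fix j
  show "columns_of lam mu n (tableau_of lam mu S) j = S j"
  proof (cases "j < n")
    case True
    let ?xs = "sorted_list_of_set (S j)" and ?m = "Suc (conj_part mu (Suc j))"
    have "(\<lambda>r. tableau_of lam mu S (r, Suc j)) ` column_rows lam mu j = (\<lambda>r. ?xs ! (r - ?m)) ` column_rows lam mu j"
      using tableau_of_entry(1)[OF S True] by simp
    also have "\<dots> = (!) ?xs ` {..<card (S j)}"
    proof -
      have "(\<lambda>r. r - ?m) ` column_rows lam mu j = {..<card (S j)}"
        using column_families_D(2)[OF S True] unfolding column_rows_def
        by (auto simp: image_iff intro!: bexI[of _ "_ + ?m"])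
      then show ?thesis by (metis image_image)
    qed
    also have "\<dots> = set ?xs" by (auto simp: in_set_conv_nth)
    also have "\<dots> = S j" using column_families_D(3)[OF S True] by simp
    finally show ?thesis unfolding columns_of_def using True by simp
  next
    case False
    then show ?thesis using S unfolding columns_of_def column_families_def by (auto simp: PiE_iff extensional_def)
  qed
qed

lemma skew_eq_image_column_rows: "skew lam mu = (\<lambda>(j, r). (r, Suc j)) ` (SIGMA j:{..<n}. column_rows lam mu j)"
  using mem_skew_iff_column_rows by force

lemma prod_columns_of:
  assumes T: "T \<in> tableaux lam mu a b"
  shows "(\<Prod>j<n. \<Prod>s\<in>columns_of lam mu n T j.
      y s - z (s + (r - 1 + int (conj_part lam 1)) - (column_offset mu j + int (rank_in (columns_of lam mu n T j) s)))) =
    (\<Prod>c\<in>skew lam mu. y (T c) - z (T c + content lam r c))"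
proof -
  let ?H = "\<lambda>c. y (T c) - z (T c + content lam r c)"
  have "(\<Prod>s\<in>columns_of lam mu n T j.
      y s - z (s + (r - 1 + int (conj_part lam 1)) - (column_offset mu j + int (rank_in (columns_of lam mu n T j) s)))) =
    (\<Prod>i\<in>column_rows lam mu j. ?H (i, Suc j))" if j: "j < n" for j
  proof -
    have col: "columns_of lam mu n T j = (\<lambda>i. T (i, Suc j)) ` column_rows lam mu j"
      unfolding columns_of_def using j by simp
    show ?thesis
      unfolding col prod.reindex[OF tableau_column(1)[OF T j]]
      using tableau_column(3)[OF T j]
      by (intro prod.cong refl) (auto simp: column_rows_def content_def column_offset_def of_nat_diff algebra_simps)
  qed
  then have "(\<Prod>j<n. \<Prod>s\<in>columns_of lam mu n T j.
      y s - z (s + (r - 1 + int (conj_part lam 1)) - (column_offset mu j + int (rank_in (columns_of lam mu n T j) s)))) =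
    (\<Prod>(j, i)\<in>(SIGMA j:{..<n}. column_rows lam mu j). ?H (i, Suc j))"
    by (simp add: prod.Sigma[symmetric] column_rows_def)
  also have "\<dots> = (\<Prod>c\<in>skew lam mu. ?H c)"
    unfolding skew_eq_image_column_rows
    by (subst prod.reindex) (auto simp: inj_on_def split_def)
  finally show ?thesis .
qed

lemma sum_tableaux_eq_sum_column_families:
  "(\<Sum>T\<in>tableaux lam mu a b. \<Prod>c\<in>skew lam mu. y (T c) - z (T c + content lam r c)) =
   (\<Sum>S\<in>column_families lam mu n a b. \<Prod>j<n. \<Prod>s\<in>S j.
      y s - z (s + (r - 1 + int (conj_part lam 1)) - (column_offset mu j + int (rank_in (S j) s))))"
proof (rule sum.reindex_bij_witness[where i = "tableau_of lam mu" and j = "columns_of lam mu n"])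
  fix T assume "T \<in> tableaux lam mu a b"
  then show "tableau_of lam mu (columns_of lam mu n T) = T" "columns_of lam mu n T \<in> column_families lam mu n a b"
    and "(\<Prod>j<n. \<Prod>s\<in>columns_of lam mu n T j. y s - z (s + (r - 1 + int (conj_part lam 1)) -
        (column_offset mu j + int (rank_in (columns_of lam mu n T j) s)))) =
      (\<Prod>c\<in>skew lam mu. y (T c) - z (T c + content lam r c))"
    by (rule tableau_of_columns_of, rule columns_of_in_column_families, rule prod_columns_of)
next
  fix S assume "S \<in> column_families lam mu n a b"
  then show "columns_of lam mu n (tableau_of lam mu S) = S" "tableau_of lam mu S \<in> tableaux lam mu a b"
    by (rule columns_of_tableau_of, rule tableau_of_in_tableaux)
qed

end

lemma flagged_S_eq_det_column_sum:
  "flagged_S lam mu r n a b y z = det (mat n n (\<lambda>(i, j).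
     column_sum y z (r - 1 + int (conj_part lam 1) - column_offset mu j) (a (Suc j)) (b (Suc i))
       (column_offset lam i - column_offset mu j)))"
  unfolding flagged_S_def column_sum_eq_esup
  by (intro arg_cong[where f = det] cong_mat refl)
    (simp add: Let_def conj_flag_a_def conj_flag_b_def content_def column_offset_def algebra_simps)

lemma lgv_compatible_column_offsets:
  assumes "column_flags lam mu n a b"
  shows "lgv_compatible n (\<lambda>j. a (Suc j)) (\<lambda>j. b (Suc j)) (column_offset mu) (column_offset lam)"
proof
  have "column_offset p (Suc j) < column_offset p j" for p j
    using conj_part_antimono[of "Suc j" "Suc (Suc j)" p] unfolding column_offset_def by simp
  then show "column_offset mu (Suc j) < column_offset mu j" "column_offset lam (Suc j) < column_offset lam j" for j
    by blast+
  fix j assume "Suc j < n" "column_offset mu j \<le> column_offset lam (Suc j)"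
  then have "1 \<le> Suc j \<and> Suc j < n \<and> conj_part mu (Suc j) < conj_part lam (Suc j + 1)"
    unfolding column_offset_def by simp
  then show "a (Suc j) - column_offset mu j \<le> a (Suc (Suc j)) - column_offset mu (Suc j) \<and>
      b (Suc j) - column_offset lam j \<le> b (Suc (Suc j)) - column_offset lam (Suc j)"
    using assms unfolding column_flags_def column_offset_def by fastforce
qed

theorem theorem4p5:
  fixes lam mu :: "nat list" and r :: int and n :: nat and a b :: "nat \<Rightarrow> int"
    and y z :: "int \<Rightarrow> 'a::comm_ring_1"
  assumes "is_partition lam" and "is_partition mu" and "part_subseteq mu lam"
    and "column_flags lam mu n a b"
  shows "flagged_S lam mu r n a b y z = (\<Sum>T\<in>ST lam mu r a b. wt lam mu y z T)"
proof -
  define F where "F s h = y s - z (s + (r - 1 + int (conj_part lam 1)) - h)" for s h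
  interpret L: lgv_compatible n "\<lambda>j. a (Suc j)" "\<lambda>j. b (Suc j)" "column_offset mu" "column_offset lam" F
    by (rule lgv_compatible_column_offsets[OF assms(4)])
  have "flagged_S lam mu r n a b y z = (\<Sum>x\<in>L.families. L.signed_weight x)"
    unfolding flagged_S_eq_det_column_sum
    by (rule L.det_eq_sum_families)
      (simp_all add: column_sum_def L.paths_def L.path_weight_def L.height_def F_def algebra_simps)
  also have "\<dots> = (\<Sum>S\<in>L.nonintersecting. \<Prod>j<n. L.path_weight j (S j))"
    by (rule L.sum_families_eq_sum_nonintersecting)
  also have "L.nonintersecting = column_families lam mu n a b"
    unfolding L.nonintersecting_def L.paths_def L.height_def column_families_def ..
  also have "(\<Sum>S\<in>column_families lam mu n a b. \<Prod>j<n. L.path_weight j (S j)) =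
      (\<Sum>T\<in>tableaux lam mu a b. \<Prod>c\<in>skew lam mu. y (T c) - z (T c + content lam r c))"
    unfolding sum_tableaux_eq_sum_column_families[OF assms] L.path_weight_def L.height_def F_def ..
  also have "\<dots> = (\<Sum>T\<in>ST lam mu r a b. wt lam mu y z T)"
    by (rule sum_ST_wt[symmetric])
  finally show ?thesis .
qed

end
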